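(* For every $n\geq0$, the map $\phi:\mathsf{Sh}_n\to\mathcal{I}_{n+1}(1234,1243)$ defined below is well defined (its image consists of involutions of $[n+1]$ avoiding both $1234$ and $1243$) and is a bijection.
   Context: A Schröder path of length $2n$ is a lattice path from $(0,0)$ to $(2n,0)$ with steps $\mathsf{h}=(2,0)$, $\mathsf{u}=(1,1)$, $\mathsf{d}=(1,-1)$ never going below the $x$-axis; it is symmetric if it is symmetric about the line $x=n$. $\mathsf{Sh}_n$ is the set of symmetric Schröder paths of length $2n$. Involutions, pattern avoidance and $\mathcal{I}_m(T)$ (involutions of $[m]$ avoiding every pattern in $T$) are as usual. The map $\phi$: given $p\in\mathsf{Sh}_n$ (as a word in $\mathsf{u},\mathsf{d},\mathsf{h}$), form the word $p'$ by appending a letter $\mathsf{h}$ at the end, replacing every factor $\mathsf{u}\mathsf{d}$ by a letter $\mathsf{r}$, and deleting all remaining $\mathsf{d}$'s; $p'=p_1\cdots p_{n+1}\in\{\mathsf{u},\mathsf{r},\mathsf{h}\}^{n+1}$. For $x\in\{\mathsf{h},\mathsf{r},\mathsf{u}\}$ let $A_x=\{i: p_i=x\}$. For each $x$, if $A_x=\{i_1<\dots<i_\ell\}$, set $\pi_{i_j}=i_{\ell+1-j}$ for $1\le j\le\ell$. Then $\phi(p)=\pi=\pi_1\cdots\pi_{n+1}$. *)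

theory Defs
  imports "HOL-Combinatorics.Permutations"
begin

datatype step = U | D | H

fun step_width :: "step \<Rightarrow> nat" where
  "step_width U = 1" | "step_width D = 1" | "step_width H = 2"

fun step_rise :: "step \<Rightarrow> int" where
  "step_rise U = 1" | "step_rise D = -1" | "step_rise H = 0"

definition height :: "step list \<Rightarrow> int" where
  "height p = sum_list (map step_rise p)"

definition schroeder :: "nat \<Rightarrow> step list \<Rightarrow> bool" where
  "schroeder n p \<longleftrightarrow> sum_list (map step_width p) = 2 * n \<and> height p = 0 \<and>
     (\<forall>k \<le> length p. height (take k p) \<ge> 0)"

(* reflection in a vertical line: reverse the word and swap u and d *)
fun flip_step :: "step \<Rightarrow> step" where
  "flip_step U = D" | "flip_step D = U" | "flip_step H = H"

definition mirror :: "step list \<Rightarrow> step list" where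
  "mirror p = rev (map flip_step p)"

definition symmetric_path :: "step list \<Rightarrow> bool" where
  "symmetric_path p \<longleftrightarrow> mirror p = p"

definition Sh :: "nat \<Rightarrow> step list set" where
  "Sh n = {p. schroeder n p \<and> symmetric_path p}"

datatype letter = Lu | Lr | Lh

fun compress :: "step list \<Rightarrow> letter list" where
  "compress [] = []"
| "compress (U # D # xs) = Lr # compress xs"
| "compress (U # xs) = Lu # compress xs"
| "compress (D # xs) = compress xs"
| "compress (H # xs) = Lh # compress xs"

definition word' :: "step list \<Rightarrow> letter list" where
  "word' p = compress (p @ [H])"

(* A_x as increasing list of 1-based positions *)
definition positions :: "letter list \<Rightarrow> letter \<Rightarrow> nat list" where
  "positions q x = filter (\<lambda>i. q ! (i - 1) = x) [1..<length q + 1]"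

(* pi_{i_j} = i_{l+1-j}; identity outside [length q] *)
definition phi :: "step list \<Rightarrow> nat \<Rightarrow> nat" where
  "phi p i = (let q = word' p in
     if i \<in> {1..length q} then
       (let A = positions q (q ! (i - 1)); j = length (filter (\<lambda>k. k < i) A)
        in rev A ! j)
     else i)"

definition contains_pattern :: "nat \<Rightarrow> (nat \<Rightarrow> nat) \<Rightarrow> nat list \<Rightarrow> bool" where
  "contains_pattern m \<pi> \<sigma> \<longleftrightarrow>
     (\<exists>f :: nat \<Rightarrow> nat. strict_mono_on {..<length \<sigma>} f \<and> (\<forall>a < length \<sigma>. f a \<in> {1..m}) \<and>
        (\<forall>a < length \<sigma>. \<forall>b < length \<sigma>. \<pi> (f a) < \<pi> (f b) \<longleftrightarrow> \<sigma> ! a < \<sigma> ! b))"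

definition avoids :: "nat \<Rightarrow> (nat \<Rightarrow> nat) \<Rightarrow> nat list \<Rightarrow> bool" where
  "avoids m \<pi> \<sigma> \<longleftrightarrow> \<not> contains_pattern m \<pi> \<sigma>"

definition Inv_avoid :: "nat \<Rightarrow> nat list set \<Rightarrow> (nat \<Rightarrow> nat) set" where
  "Inv_avoid m T = {\<pi>. \<pi> permutes {1..m} \<and> (\<forall>i. \<pi> (\<pi> i) = i) \<and> (\<forall>\<sigma>\<in>T. avoids m \<pi> \<sigma>)}"

end

(* A symmetric Schroeder path is determined by its left half alpha, read as a word in the tokens
   h, ud, u, d (a u directly followed by d always forming the token ud), and a middle token mu in
   {(), h, ud}; its word p' is fwd(alpha) mu rev(bwd(alpha)) h, bwd recording the mirror image.
   phi(p) pairs the j-th with the j-th last occurrence of each letter.  The key observation is that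
   the letter at position i is h, r or u according as 0, 1 or at least 2 larger values of phi(p)
   follow i, while an occurrence of 1234 or 1243 is an ascent followed by two larger values.
   Peeling off the first letter (unpaired, giving a fixed point 1) or the first pair of equal
   letters (giving a 2-cycle (1 k)) shows by induction that the letters are recovered from phi(p)
   and that phi(p) avoids both patterns.  Conversely every avoiding involution arises from a
   smaller one by adding such a fixed point or 2-cycle, and the half path is extended accordingly
   by prepending h, ud or u, or by inserting a u together with a matching d. *)
theory Submission
  imports Defs
begin

definition class_rev :: "letter list \<Rightarrow> nat \<Rightarrow> nat" where
  "class_rev q i = (if i \<in> {1..length q} then
       (let A = positions q (q ! (i - 1)); j = length (filter (\<lambda>k. k < i) A)
        in rev A ! j)
     else i)"

lemma phi_eq_class_rev: "phi p = class_rev (word' p)"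
  by (rule ext) (simp add: phi_def class_rev_def Let_def)

lemma sorted_positions: "sorted_wrt (<) (positions q x)"
  unfolding positions_def by (intro sorted_wrt_filter sorted_wrt_upt)

lemma set_positions:
  "set (positions q x) = {l. 1 \<le> l \<and> l \<le> length q \<and> q!(l-1) = x}"
  unfolding positions_def by auto

lemma count_take_filter_upt:
  "t \<le> length q \<Longrightarrow> count_list (take t q) x = length (filter (\<lambda>l. q!(l-1) = x) [1..<Suc t])"
proof (induction t)
  case 0 then show ?case by simp
next
  case (Suc t)
  have "take (Suc t) q = take t q @ [q!t]" using Suc.prems by (simp add: take_Suc_conv_app_nth)
  then show ?case using Suc by simp
qed

lemma count_take_positions:
  "t \<le> length q \<Longrightarrow> count_list (take t q) x = length (filter (\<lambda>l. l < Suc t) (positions q x))"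
proof -
  assume t: "t \<le> length q"
  let ?P = "\<lambda>l. q!(l-1) = x"
  have e: "[1..<length q + 1] = [1..<Suc t] @ [Suc t..<length q + 1]"
    using upt_add_eq_append[of 1 "Suc t" "length q - t"] t by simp
  have a: "filter (\<lambda>l. l < Suc t) (positions q x) = filter (\<lambda>l. l < Suc t) (filter ?P [1..<Suc t]) @ filter (\<lambda>l. l < Suc t) (filter ?P [Suc t..<length q + 1])"
    unfolding positions_def e by simp
  have b: "filter (\<lambda>l. l < Suc t) (filter ?P [Suc t..<length q + 1]) = []"
    by (auto simp: filter_empty_conv)
  have c: "filter (\<lambda>l. l < Suc t) (filter ?P [1..<Suc t]) = filter ?P [1..<Suc t]"
    by (rule filter_True) auto
  show ?thesis using count_take_filter_upt[OF t] a b c by simp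
qed

lemma length_positions: "length (positions q x) = count_list q x"
proof -
  have "filter (\<lambda>l. l < Suc (length q)) (positions q x) = positions q x"
    by (rule filter_True) (auto simp: set_positions)
  then show ?thesis using count_take_positions[of "length q" q x] by simp
qed

lemma count_drop_positions:
  "j \<le> length q \<Longrightarrow> count_list (drop j q) x = length (filter (\<lambda>l. j < l) (positions q x))"
proof -
  assume j: "j \<le> length q"
  have "count_list q x = count_list (take j q) x + count_list (drop j q) x"
    by (metis append_take_drop_id count_list_append)
  moreover have "length (positions q x) = length (filter (\<lambda>l. l < Suc j) (positions q x)) + length (filter (\<lambda>l. \<not> l < Suc j) (positions q x))"
    by (simp add: sum_length_filter_compl)
  moreover have "(\<lambda>l. \<not> l < Suc j) = (\<lambda>l. j < l)" by auto
  ultimately show ?thesis using count_take_positions[OF j, of x] length_positions[of q x] by simp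
qed

lemma sorted_wrt_length_filter_less:
  "sorted_wrt (<) (A::nat list) \<Longrightarrow> m < length A \<Longrightarrow> length (filter (\<lambda>l. l < A!m) A) = m"
proof (induction A arbitrary: m)
  case Nil then show ?case by simp
next
  case (Cons a A)
  show ?case
  proof (cases m)
    case 0
    then show ?thesis using Cons.prems by (auto simp: filter_empty_conv)
  next
    case (Suc m')
    have "a < A!m'" using Cons.prems Suc by auto
    then show ?thesis using Cons Suc by auto
  qed
qed

lemma sorted_wrt_length_filter_greater:
  "sorted_wrt (<) (A::nat list) \<Longrightarrow> m < length A \<Longrightarrow> length (filter (\<lambda>l. A!m < l) A) = length A - 1 - m"
proof (induction A arbitrary: m)
  case Nil then show ?case by simp
next
  case (Cons a A)
  show ?case
  proof (cases m)
    case 0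
    then show ?thesis using Cons.prems by (auto simp: filter_id_conv)
  next
    case (Suc m')
    have "a < A!m'" using Cons.prems Suc by auto
    then have "\<not> A!m' < a" by simp
    then have "filter (\<lambda>l. (a#A)!m < l) (a#A) = filter (\<lambda>l. A!m' < l) A" using Suc by simp
    moreover have "length (filter (\<lambda>l. A!m' < l) A) = length A - 1 - m'"
      using Cons.IH Cons.prems Suc by simp
    ultimately show ?thesis using Suc by simp
  qed
qed

definition mirror_pos :: "letter list \<Rightarrow> nat \<Rightarrow> nat \<Rightarrow> bool" where
  "mirror_pos q i j \<longleftrightarrow> 1 \<le> j \<and> j \<le> length q \<and> q!(j-1) = q!(i-1) \<and>
     count_list (take (i-1) q) (q!(i-1)) = count_list (drop j q) (q!(i-1))"

lemma mirror_pos_class_rev: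
  assumes "1 \<le> i" "i \<le> length q"
  shows "mirror_pos q i (class_rev q i)"
proof -
  define x where "x = q!(i-1)"
  define A where "A = positions q x"
  have sA: "sorted_wrt (<) A" unfolding A_def by (rule sorted_positions)
  have "i \<in> set A" unfolding A_def set_positions x_def using assms by auto
  then obtain m where m: "m < length A" "A!m = i" by (meson in_set_conv_nth)
  have c: "length (filter (\<lambda>k. k < i) A) = m" using sorted_wrt_length_filter_less[OF sA m(1)] m(2) by simp
  have r: "class_rev q i = A ! (length A - 1 - m)"
    using assms m(1) c unfolding class_rev_def A_def x_def by (simp add: Let_def rev_nth)
  define j where "j = A ! (length A - 1 - m)"
  have "j \<in> set A" unfolding j_def using m(1) by simp
  then have j: "1 \<le> j" "j \<le> length q" "q!(j-1) = x" unfolding A_def set_positions by auto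
  have "count_list (take (i-1) q) x = m"
    using count_take_positions[of "i-1" q x] assms c by (simp add: A_def)
  moreover have "count_list (drop j q) x = m"
  proof -
    have "count_list (drop j q) x = length (filter (\<lambda>l. j < l) A)" using count_drop_positions[OF j(2)] A_def by simp
    also have "\<dots> = length A - 1 - (length A - 1 - m)"
      unfolding j_def using sorted_wrt_length_filter_greater[OF sA, of "length A - 1 - m"] m(1) by simp
    also have "\<dots> = m" using m(1) by simp
    finally show ?thesis .
  qed
  ultimately show ?thesis using j r unfolding mirror_pos_def j_def x_def by simp
qed

lemma count_list_take_nth_drop: assumes "1 \<le> i" "i \<le> length q"
  shows "count_list (take (i-1) q) y + (if q!(i-1) = y then 1 else 0) + count_list (drop i q) y = count_list q y"
proof -
  have "q = take (i-1) q @ q!(i-1) # drop (Suc (i-1)) q" using assms id_take_nth_drop[of "i-1" q] by simp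
  also have "Suc (i-1) = i" using assms by simp
  finally have "count_list q y = count_list (take (i-1) q) y + count_list (q!(i-1) # drop i q) y"
    by (metis count_list_append)
  then show ?thesis by simp
qed

lemma mirror_pos_unique: assumes "mirror_pos q i j" "mirror_pos q i j'" shows "j = j'"
proof (rule ccontr)
  assume ne: "j \<noteq> j'"
  define x where "x = q!(i-1)"
  have key: "count_list (drop a q) x > count_list (drop b q) x" if "a < b" "mirror_pos q i a" "mirror_pos q i b" for a b
  proof -
    have b: "1 \<le> b" "b \<le> length q" "q!(b-1) = x" using that unfolding mirror_pos_def x_def by auto
    have e: "take b q @ drop b q = q" by simp
    have d: "drop a (take b q @ drop b q) = drop a (take b q) @ drop (a - length (take b q)) (drop b q)"
      by (rule drop_append)
    have "a - length (take b q) = 0" using that(1) b(2) by simp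
    then have "drop a q = drop a (take b q) @ drop b q" using d e by (metis drop_0)
    moreover have "x \<in> set (drop a (take b q))"
    proof -
      have "drop a (take b q) ! (b - 1 - a) = q ! (b-1)" using that(1) b by auto
      moreover have "b - 1 - a < length (drop a (take b q))" using that(1) b by auto
      ultimately show ?thesis using b(3) by (metis nth_mem)
    qed
    ultimately show ?thesis by (simp add: count_list_0_iff[symmetric])
         (metis count_list_0_iff gr0I)
  qed
  show False
  proof (cases "j < j'")
    case True
    then show ?thesis using key[OF True assms] assms unfolding mirror_pos_def x_def by simp
  next
    case False
    then have jj: "j' < j" using ne by simp
    show ?thesis using key[OF jj assms(2) assms(1)] assms unfolding mirror_pos_def x_def by simp
  qed
qed

lemma class_rev_eqI:
  "1 \<le> i \<Longrightarrow> i \<le> length q \<Longrightarrow> mirror_pos q i j \<Longrightarrow> class_rev q i = j"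
  using mirror_pos_class_rev mirror_pos_unique by blast

lemma class_rev_outside:
  "\<not> (1 \<le> i \<and> i \<le> length q) \<Longrightarrow> class_rev q i = i"
  unfolding class_rev_def by auto

lemma class_rev_range:
  "1 \<le> i \<Longrightarrow> i \<le> length q \<Longrightarrow> 1 \<le> class_rev q i \<and> class_rev q i \<le> length q"
  using mirror_pos_class_rev unfolding mirror_pos_def by blast

lemma class_rev_letter:
  "1 \<le> i \<Longrightarrow> i \<le> length q \<Longrightarrow> q ! (class_rev q i - 1) = q ! (i - 1)"
  using mirror_pos_class_rev unfolding mirror_pos_def by blast

lemma class_rev_class_rev: "class_rev q (class_rev q i) = i"
proof (cases "1 \<le> i \<and> i \<le> length q")
  case True
  define j where "j = class_rev q i"
  have c: "mirror_pos q i j" unfolding j_def using True mirror_pos_class_rev by blast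
  then have j: "1 \<le> j" "j \<le> length q" "q!(j-1) = q!(i-1)" unfolding mirror_pos_def by auto
  have "mirror_pos q j i"
  proof -
    define x where "x = q!(i-1)"
    have s1: "count_list (take (i-1) q) x + 1 + count_list (drop i q) x = count_list q x"
      using count_list_take_nth_drop[of i q x] True x_def by simp
    have s2: "count_list (take (j-1) q) x + 1 + count_list (drop j q) x = count_list q x"
      using count_list_take_nth_drop[of j q x] j x_def by simp
    have "count_list (take (i-1) q) x = count_list (drop j q) x" using c unfolding mirror_pos_def x_def by simp
    then have "count_list (take (j-1) q) x = count_list (drop i q) x" using s1 s2 by simp
    then show ?thesis unfolding mirror_pos_def using True j x_def by simp
  qed
  then show ?thesis using class_rev_eqI j unfolding j_def by blast
next
  case False
  then show ?thesis by (simp add: class_rev_outside)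
qed

lemma involution_permutes:
  assumes "\<And>i. f (f i) = i" "\<And>i. i \<notin> S \<Longrightarrow> f i = i"
  shows "f permutes S"
  unfolding permutes_def
proof (intro conjI allI impI)
  fix y show "\<exists>!x. f x = y"
    by (rule ex1I[of _ "f y"]) (use assms in metis)+
qed (use assms in auto)

lemma class_rev_permutes: "class_rev q permutes {1..length q}"
  by (rule involution_permutes) (auto simp: class_rev_class_rev class_rev_outside)

definition larger_after :: "nat \<Rightarrow> (nat \<Rightarrow> nat) \<Rightarrow> nat \<Rightarrow> nat" where
  "larger_after N \<pi> b = card {c. b < c \<and> c \<le> N \<and> \<pi> b < \<pi> c}"

(* An occurrence of 1234 or 1243 is exactly an ascent a < b followed by two values above pi b. *)
definition ascent_tops_bounded :: "nat \<Rightarrow> (nat \<Rightarrow> nat) \<Rightarrow> bool" where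
  "ascent_tops_bounded N \<pi> \<longleftrightarrow> (\<forall>a b. 1 \<le> a \<longrightarrow> a < b \<longrightarrow> b \<le> N \<longrightarrow> \<pi> a < \<pi> b \<longrightarrow> larger_after N \<pi> b \<le> 1)"

(* lift k is the increasing bijection from {1..N-2} onto {2..N} - {k}. *)
definition lift :: "nat \<Rightarrow> nat \<Rightarrow> nat" where
  "lift k v = (if v + 1 < k then v + 1 else v + 2)"

definition unlift :: "nat \<Rightarrow> nat \<Rightarrow> nat" where
  "unlift k i = (if i < k then i - 1 else i - 2)"

definition add_cycle :: "nat \<Rightarrow> nat \<Rightarrow> (nat \<Rightarrow> nat) \<Rightarrow> nat \<Rightarrow> nat" where
  "add_cycle N k \<sigma> i = (if i = 1 then k else if i = k then 1
      else if 2 \<le> i \<and> i \<le> N then lift k (\<sigma> (unlift k i)) else i)"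

definition add_fixed :: "nat \<Rightarrow> (nat \<Rightarrow> nat) \<Rightarrow> nat \<Rightarrow> nat" where
  "add_fixed N \<sigma> i = (if i = 1 then 1 else if 2 \<le> i \<and> i \<le> N then Suc (\<sigma> (i - 1)) else i)"

lemma lift_range:
  "2 \<le> k \<Longrightarrow> k \<le> N \<Longrightarrow> 1 \<le> v \<Longrightarrow> v \<le> N - 2 \<Longrightarrow> 2 \<le> lift k v \<and> lift k v \<le> N \<and> lift k v \<noteq> k"
  unfolding lift_def by auto

lemma unlift_lift[simp]: "unlift k (lift k v) = v"
  unfolding lift_def unlift_def by auto

lemma lift_unlift:
  "2 \<le> i \<Longrightarrow> i \<noteq> k \<Longrightarrow> lift k (unlift k i) = i"
  unfolding lift_def unlift_def by auto

lemma unlift_range: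
  "2 \<le> i \<Longrightarrow> i \<le> N \<Longrightarrow> i \<noteq> k \<Longrightarrow> 2 \<le> k \<Longrightarrow> k \<le> N \<Longrightarrow> 1 \<le> unlift k i \<and> unlift k i \<le> N - 2"
  unfolding unlift_def by auto

lemma lift_less_iff[simp]: "lift k v < lift k w \<longleftrightarrow> v < w"
  unfolding lift_def by auto

lemma lift_eq_iff[simp]: "lift k v = lift k w \<longleftrightarrow> v = w"
  unfolding lift_def by auto

lemma less_lift_iff: "2 \<le> k \<Longrightarrow> k < lift k w \<longleftrightarrow> k \<le> w + 1"
  unfolding lift_def by auto

lemma lift_ge2: "1 \<le> v \<Longrightarrow> 2 \<le> lift k v"
  unfolding lift_def by auto

lemma add_cycle_1[simp]: "add_cycle N k \<sigma> 1 = k" unfolding add_cycle_def by simp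

lemma add_cycle_Suc_0[simp]: "add_cycle N k \<sigma> (Suc 0) = k" unfolding add_cycle_def by simp

lemma add_cycle_nonzero:
  "2 \<le> k \<Longrightarrow> 1 \<le> a \<Longrightarrow> add_cycle N k \<sigma> a \<noteq> 0" unfolding add_cycle_def lift_def by auto

lemma lift_nonzero[simp]: "lift k w \<noteq> 0" unfolding lift_def by simp

lemma add_cycle_k[simp]:
  "2 \<le> k \<Longrightarrow> add_cycle N k \<sigma> k = 1" unfolding add_cycle_def by simp

lemma add_cycle_lift:
  "2 \<le> k \<Longrightarrow> k \<le> N \<Longrightarrow> 1 \<le> v \<Longrightarrow> v \<le> N - 2 \<Longrightarrow> add_cycle N k \<sigma> (lift k v) = lift k (\<sigma> v)"
  using lift_range[of k N v] unfolding add_cycle_def by auto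

lemma card_preimage_permutes:
  assumes "\<sigma> permutes Dm" "T \<subseteq> Dm" "finite Dm"
  shows "card {v \<in> Dm. \<sigma> v \<in> T} = card T"
proof -
  have inj: "inj_on \<sigma> {v \<in> Dm. \<sigma> v \<in> T}" using assms(1) permutes_inj inj_on_subset by blast
  have "\<sigma> ` {v \<in> Dm. \<sigma> v \<in> T} = T"
  proof
    show "\<sigma> ` {v \<in> Dm. \<sigma> v \<in> T} \<subseteq> T" by auto
    show "T \<subseteq> \<sigma> ` {v \<in> Dm. \<sigma> v \<in> T}"
    proof
      fix t assume t: "t \<in> T"
      obtain v where "\<sigma> v = t" using assms(1) permutes_surj by (metis surj_def)
      moreover have "v \<in> Dm" using assms t calculation by (metis in_mono permutes_not_in)
      ultimately show "t \<in> \<sigma> ` {v \<in> Dm. \<sigma> v \<in> T}" using t by blast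
    qed
  qed
  then show ?thesis using card_image[OF inj] by simp
qed

lemma permutes_range:
  "\<sigma> permutes {1..M} \<Longrightarrow> 1 \<le> v \<Longrightarrow> v \<le> M \<Longrightarrow> 1 \<le> \<sigma> v \<and> \<sigma> v \<le> M"
  using permutes_in_image[of \<sigma> "{1..M}" v] by auto

lemma larger_after_add_cycle_lift:
  assumes k: "2 \<le> k" "k \<le> N" and v: "1 \<le> v" "v \<le> N - 2"
  shows "larger_after N (add_cycle N k \<sigma>) (lift k v) = larger_after (N-2) \<sigma> v"
proof -
  let ?\<pi> = "add_cycle N k \<sigma>"
  have e: "{c. lift k v < c \<and> c \<le> N \<and> ?\<pi> (lift k v) < ?\<pi> c} = lift k ` {c. v < c \<and> c \<le> N-2 \<and> \<sigma> v < \<sigma> c}"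
  proof (intro set_eqI iffI)
    fix c assume c: "c \<in> {c. lift k v < c \<and> c \<le> N \<and> ?\<pi> (lift k v) < ?\<pi> c}"
    have pv: "?\<pi> (lift k v) = lift k (\<sigma> v)" using add_cycle_lift k v by blast
    have "2 \<le> c" using c lift_ge2[OF v(1), of k] by auto
    moreover have "c \<noteq> k"
    proof
      assume "c = k" then have "?\<pi> c = 1" using k by simp
      then show False using c pv by auto
    qed
    ultimately have cu: "c = lift k (unlift k c)" "1 \<le> unlift k c" "unlift k c \<le> N - 2"
      using lift_unlift unlift_range[of c N k] c k by auto
    have "?\<pi> c = lift k (\<sigma> (unlift k c))" using add_cycle_lift[OF k cu(2,3)] cu(1) by metis
    then have "v < unlift k c \<and> unlift k c \<le> N - 2 \<and> \<sigma> v < \<sigma> (unlift k c)"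
      using c pv cu by (metis (mono_tags, lifting) lift_less_iff mem_Collect_eq)
    then show "c \<in> lift k ` {c. v < c \<and> c \<le> N-2 \<and> \<sigma> v < \<sigma> c}" using cu(1) by blast
  next
    fix c assume "c \<in> lift k ` {c. v < c \<and> c \<le> N-2 \<and> \<sigma> v < \<sigma> c}"
    then obtain w where w: "c = lift k w" "v < w" "w \<le> N-2" "\<sigma> v < \<sigma> w" by auto
    have "?\<pi> (lift k v) = lift k (\<sigma> v)" "?\<pi> (lift k w) = lift k (\<sigma> w)"
      using add_cycle_lift k v w by auto
    then show "c \<in> {c. lift k v < c \<and> c \<le> N \<and> ?\<pi> (lift k v) < ?\<pi> c}"
      using w lift_range[OF k, of w] v by auto
  qed
  have "inj_on (lift k) X" for X by (auto intro: inj_onI)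
  then show ?thesis unfolding larger_after_def e by (simp add: card_image)
qed

lemma larger_after_add_cycle_1:
  assumes s: "\<sigma> permutes {1..N-2}" and k: "2 \<le> k" "k \<le> N"
  shows "larger_after N (add_cycle N k \<sigma>) 1 = N - k"
proof -
  let ?\<pi> = "add_cycle N k \<sigma>"
  have e: "{c. 1 < c \<and> c \<le> N \<and> ?\<pi> 1 < ?\<pi> c} = lift k ` {v \<in> {1..N-2}. \<sigma> v \<in> {k-1..N-2}}"
  proof (intro set_eqI iffI)
    fix c assume c: "c \<in> {c. 1 < c \<and> c \<le> N \<and> ?\<pi> 1 < ?\<pi> c}"
    have "c \<noteq> k" using c k by auto
    then have cu: "c = lift k (unlift k c)" "1 \<le> unlift k c" "unlift k c \<le> N - 2"
      using lift_unlift unlift_range[of c N k] c k by auto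
    have "?\<pi> c = lift k (\<sigma> (unlift k c))" using add_cycle_lift[OF k cu(2,3)] cu(1) by metis
    then have "k \<le> \<sigma> (unlift k c) + 1" using c less_lift_iff[OF k(1)] by simp
    moreover have "\<sigma> (unlift k c) \<le> N - 2" using permutes_range[OF s cu(2,3)] by simp
    ultimately show "c \<in> lift k ` {v \<in> {1..N-2}. \<sigma> v \<in> {k-1..N-2}}" using cu by force
  next
    fix c assume "c \<in> lift k ` {v \<in> {1..N-2}. \<sigma> v \<in> {k-1..N-2}}"
    then obtain w where w: "c = lift k w" "1 \<le> w" "w \<le> N-2" "k - 1 \<le> \<sigma> w" by auto
    have "?\<pi> (lift k w) = lift k (\<sigma> w)" using add_cycle_lift k w by auto
    then show "c \<in> {c. 1 < c \<and> c \<le> N \<and> ?\<pi> 1 < ?\<pi> c}"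
      using w lift_range[OF k, of w] less_lift_iff[OF k(1), of "\<sigma> w"] by auto
  qed
  have "inj_on (lift k) X" for X by (auto intro: inj_onI)
  then have "larger_after N ?\<pi> 1 = card {v \<in> {1..N-2}. \<sigma> v \<in> {k-1..N-2}}" unfolding larger_after_def e by (simp add: card_image)
  also have "\<dots> = card {k-1..N-2}" by (rule card_preimage_permutes[OF s]) (use k in auto)
  also have "\<dots> = N - k" using k by simp
  finally show ?thesis .
qed

lemma larger_after_add_cycle_k:
  assumes s: "\<sigma> permutes {1..N-2}" and k: "2 \<le> k" "k \<le> N"
  shows "larger_after N (add_cycle N k \<sigma>) k = N - k"
proof -
  let ?\<pi> = "add_cycle N k \<sigma>"
  have e: "{c. k < c \<and> c \<le> N \<and> ?\<pi> k < ?\<pi> c} = {k<..N}"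
  proof (intro set_eqI iffI)
    fix c assume c: "c \<in> {k<..N}"
    then have cu: "c = lift k (unlift k c)" "1 \<le> unlift k c" "unlift k c \<le> N - 2"
      using lift_unlift unlift_range[of c N k] k by auto
    have "?\<pi> c = lift k (\<sigma> (unlift k c))" using add_cycle_lift[OF k cu(2,3)] cu(1) by metis
    moreover have "1 \<le> \<sigma> (unlift k c)" using permutes_range[OF s cu(2,3)] by simp
    ultimately show "c \<in> {c. k < c \<and> c \<le> N \<and> ?\<pi> k < ?\<pi> c}"
      using c k lift_ge2[of "\<sigma> (unlift k c)" k] by auto
  qed auto
  show ?thesis unfolding larger_after_def e by simp
qed

lemma add_fixed_1[simp]: "add_fixed N \<sigma> 1 = 1" unfolding add_fixed_def by simp

lemma add_fixed_Suc_0[simp]: "add_fixed N \<sigma> (Suc 0) = Suc 0" unfolding add_fixed_def by simp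

lemma add_fixed_Suc:
  "1 \<le> v \<Longrightarrow> v \<le> N - 1 \<Longrightarrow> add_fixed N \<sigma> (Suc v) = Suc (\<sigma> v)" unfolding add_fixed_def by auto

lemma larger_after_add_fixed_Suc:
  assumes v: "1 \<le> v" "v \<le> N - 1"
  shows "larger_after N (add_fixed N \<sigma>) (Suc v) = larger_after (N-1) \<sigma> v"
proof -
  let ?\<pi> = "add_fixed N \<sigma>"
  have e: "{c. Suc v < c \<and> c \<le> N \<and> ?\<pi> (Suc v) < ?\<pi> c} = Suc ` {c. v < c \<and> c \<le> N-1 \<and> \<sigma> v < \<sigma> c}"
  proof (intro set_eqI iffI)
    fix c assume c: "c \<in> {c. Suc v < c \<and> c \<le> N \<and> ?\<pi> (Suc v) < ?\<pi> c}"
    define w where "w = c - 1"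
    have w: "c = Suc w" "1 \<le> w" "w \<le> N - 1" using c v unfolding w_def by auto
    then show "c \<in> Suc ` {c. v < c \<and> c \<le> N-1 \<and> \<sigma> v < \<sigma> c}" using c add_fixed_Suc v by auto
  next
    fix c assume "c \<in> Suc ` {c. v < c \<and> c \<le> N-1 \<and> \<sigma> v < \<sigma> c}"
    then show "c \<in> {c. Suc v < c \<and> c \<le> N \<and> ?\<pi> (Suc v) < ?\<pi> c}" using add_fixed_Suc v by auto
  qed
  show ?thesis unfolding larger_after_def e by (simp add: card_image)
qed

lemma larger_after_add_fixed_1:
  assumes s: "\<sigma> permutes {1..N-1}"
  shows "larger_after N (add_fixed N \<sigma>) 1 = N - 1"
proof -
  let ?\<pi> = "add_fixed N \<sigma>"
  have e: "{c. 1 < c \<and> c \<le> N \<and> ?\<pi> 1 < ?\<pi> c} = {1<..N}"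
  proof (intro set_eqI iffI)
    fix c assume c: "c \<in> {1<..N}"
    define w where "w = c - 1"
    have w: "c = Suc w" "1 \<le> w" "w \<le> N - 1" using c unfolding w_def by auto
    then show "c \<in> {c. 1 < c \<and> c \<le> N \<and> ?\<pi> 1 < ?\<pi> c}" using c add_fixed_Suc[OF w(2,3)] permutes_range[OF s w(2,3)] by auto
  qed auto
  show ?thesis unfolding larger_after_def e by simp
qed

lemma ascent_tops_bounded_add_cycle:
  assumes k: "2 \<le> k" "k \<le> N" and n: "ascent_tops_bounded (N-2) \<sigma>"
    and h1: "\<And>b. k < b \<Longrightarrow> b \<le> N \<Longrightarrow> larger_after N (add_cycle N k \<sigma>) b \<le> 1"
    and h2: "\<And>b. 1 \<le> b \<Longrightarrow> b \<le> N \<Longrightarrow> k < add_cycle N k \<sigma> b \<Longrightarrow> larger_after N (add_cycle N k \<sigma>) b \<le> 1"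
  shows "ascent_tops_bounded N (add_cycle N k \<sigma>)"
  unfolding ascent_tops_bounded_def
proof (intro allI impI)
  fix a b assume ab: "1 \<le> a" "a < b" "b \<le> N" "add_cycle N k \<sigma> a < add_cycle N k \<sigma> b"
  let ?\<pi> = "add_cycle N k \<sigma>"
  show "larger_after N ?\<pi> b \<le> 1"
  proof (cases "a = 1")
    case True then show ?thesis using ab h2 by auto
  next
    case a1: False
    show ?thesis
    proof (cases "a = k")
      case True then show ?thesis using ab h1 by auto
    next
      case ak: False
      have bk: "b \<noteq> k"
      proof
        assume "b = k" then have "add_cycle N k \<sigma> b = 1" using k by simp
        then show False using ab add_cycle_nonzero[OF k(1) ab(1), of N \<sigma>] by simp
      qed
      have au: "a = lift k (unlift k a)" "1 \<le> unlift k a" "unlift k a \<le> N - 2"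
        using lift_unlift unlift_range[of a N k] ab a1 ak k by auto
      have bu: "b = lift k (unlift k b)" "1 \<le> unlift k b" "unlift k b \<le> N - 2"
        using lift_unlift unlift_range[of b N k] ab bk k by auto
      have "?\<pi> a = lift k (\<sigma> (unlift k a))" "?\<pi> b = lift k (\<sigma> (unlift k b))"
        using add_cycle_lift[OF k au(2,3)] add_cycle_lift[OF k bu(2,3)] au(1) bu(1) by metis+
      then have "\<sigma> (unlift k a) < \<sigma> (unlift k b)" "unlift k a < unlift k b" using ab au(1) bu(1) by (metis lift_less_iff)+
      then have "larger_after (N-2) \<sigma> (unlift k b) \<le> 1" using n au bu unfolding ascent_tops_bounded_def by blast
      then show ?thesis using larger_after_add_cycle_lift[OF k bu(2,3)] bu(1) by metis
    qed
  qed
qed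

lemma ascent_tops_boundedI:
  assumes "\<And>b. 2 \<le> b \<Longrightarrow> b \<le> N \<Longrightarrow> larger_after N \<pi> b \<le> 1"
  shows "ascent_tops_bounded N \<pi>"
  using assms unfolding ascent_tops_bounded_def by auto

lemma all_less_4:
  "(\<forall>x::nat. x < 4 \<longrightarrow> P x) \<longleftrightarrow> P 0 \<and> P 1 \<and> P 2 \<and> P 3"
  by (auto simp: eval_nat_numeral less_Suc_eq)

lemma strict_mono_on_4:
  fixes f :: "nat \<Rightarrow> nat" assumes "f 0 < f 1" "f 1 < f 2" "f 2 < f 3"
  shows "strict_mono_on {..<4} f"
  unfolding strict_mono_on_def
proof (intro allI impI)
  fix r s :: nat assume "r \<in> {..<4} \<and> s \<in> {..<4} \<and> r < s"
  then have "r = 0 \<and> s = 1 \<or> r = 0 \<and> s = 2 \<or> r = 0 \<and> s = 3 \<or> r = 1 \<and> s = 2 \<or> r = 1 \<and> s = 3 \<or> r = 2 \<and> s = 3"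
    by (auto simp: eval_nat_numeral less_Suc_eq)
  then show "f r < f s" using assms by auto
qed

lemma card_ge_2_obtains:
  assumes "2 \<le> card S"
  obtains c1 c2 :: nat where "c1 \<in> S" "c2 \<in> S" "c1 < c2"
proof -
  obtain a b where "a \<in> S" "b \<in> S" "a \<noteq> b"
    using assms by (auto simp: numeral_2_eq_2 card_le_Suc_iff)
  then show ?thesis using that by (metis linorder_neqE_nat)
qed

lemma ascent_top_contains_1234_or_1243:
  assumes p: "\<pi> permutes {1..N}" and ab: "1 \<le> a" "a < b" "b \<le> N" "\<pi> a < \<pi> b"
    and two: "2 \<le> larger_after N \<pi> b"
  shows "contains_pattern N \<pi> [1,2,3,4] \<or> contains_pattern N \<pi> [1,2,4,3]"
proof -
  obtain c1 c2 where c: "b < c1" "c1 \<le> N" "\<pi> b < \<pi> c1" "b < c2" "c2 \<le> N" "\<pi> b < \<pi> c2" "c1 < c2"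
    using two unfolding larger_after_def by (rule card_ge_2_obtains) auto
  have "\<pi> c1 \<noteq> \<pi> c2" using c p permutes_inj by (metis injD less_irrefl)
  define f where "f = (\<lambda>i::nat. [a, b, c1, c2] ! i)"
  have f: "f 0 = a" "f 1 = b" "f (Suc 0) = b" "f 2 = c1" "f 3 = c2"
    unfolding f_def by (simp_all add: eval_nat_numeral)
  have sm: "strict_mono_on {..<4} f"
    by (rule strict_mono_on_4) (use ab c in \<open>simp_all add: f\<close>)
  have rng: "\<forall>x < 4. f x \<in> {1..N}" by (simp only: all_less_4) (use ab c in \<open>simp add: f\<close>)
  have l4: "length [1,2,3,4::nat] = 4" "length [1,2,4,3::nat] = 4" by simp_all
  consider "\<pi> c1 < \<pi> c2" | "\<pi> c2 < \<pi> c1" using \<open>\<pi> c1 \<noteq> \<pi> c2\<close> by linarith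
  then show ?thesis
  proof cases
    case 1
    have "contains_pattern N \<pi> [1,2,3,4]" unfolding contains_pattern_def l4
      using sm rng ab c 1 by (intro exI[of _ f]) (simp only: all_less_4, simp add: f)
    then show ?thesis ..
  next
    case 2
    have "contains_pattern N \<pi> [1,2,4,3]" unfolding contains_pattern_def l4
      using sm rng ab c 2 by (intro exI[of _ f]) (simp only: all_less_4, simp add: f)
    then show ?thesis ..
  qed
qed

lemma contains_1234_or_1243_ascent_top:
  assumes "contains_pattern N \<pi> \<sigma>" and "\<sigma> = [1,2,3,4] \<or> \<sigma> = [1,2,4,3]"
  obtains a b where "1 \<le> a" "a < b" "b \<le> N" "\<pi> a < \<pi> b" "2 \<le> larger_after N \<pi> b"
proof -
  obtain f where f: "strict_mono_on {..<length \<sigma>} f" "\<forall>a < length \<sigma>. f a \<in> {1..N}"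
      "\<forall>a < length \<sigma>. \<forall>b < length \<sigma>. \<pi> (f a) < \<pi> (f b) \<longleftrightarrow> \<sigma> ! a < \<sigma> ! b"
    using assms(1) unfolding contains_pattern_def by blast
  have l: "length \<sigma> = 4" using assms(2) by auto
  have o: "f 0 < f 1" "f 1 < f 2" "f 2 < f 3"
    using f(1) l unfolding strict_mono_on_def by simp_all
  have r: "1 \<le> f 0" "f 3 \<le> N" using f(2) l by auto
  have s: "\<sigma>!0 < \<sigma>!1" "\<sigma>!1 < \<sigma>!2" "\<sigma>!1 < \<sigma>!3" using assms(2) by (auto simp: eval_nat_numeral)
  have v: "\<pi> (f 0) < \<pi> (f 1)" "\<pi> (f 1) < \<pi> (f 2)" "\<pi> (f 1) < \<pi> (f 3)"
    using f(3) l s by simp_all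
  have "{f 2, f 3} \<subseteq> {c. f 1 < c \<and> c \<le> N \<and> \<pi> (f 1) < \<pi> c}" using o r v by auto
  then have "card {f 2, f 3} \<le> larger_after N \<pi> (f 1)"
    unfolding larger_after_def by (rule card_mono[rotated]) auto
  then have "2 \<le> larger_after N \<pi> (f 1)" using o by simp
  then show ?thesis using that[of "f 0" "f 1"] o r v by simp
qed

lemma avoids_1234_1243_iff:
  assumes "\<pi> permutes {1..N}"
  shows "(avoids N \<pi> [1,2,3,4] \<and> avoids N \<pi> [1,2,4,3]) \<longleftrightarrow> ascent_tops_bounded N \<pi>"
proof
  assume avoid: "avoids N \<pi> [1,2,3,4] \<and> avoids N \<pi> [1,2,4,3]"
  show "ascent_tops_bounded N \<pi>"
    unfolding ascent_tops_bounded_def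
  proof (intro allI impI, rule ccontr)
    fix a b assume "1 \<le> a" "a < b" "b \<le> N" "\<pi> a < \<pi> b" "\<not> larger_after N \<pi> b \<le> 1"
    moreover from this have "2 \<le> larger_after N \<pi> b" by simp
    ultimately show False
      using ascent_top_contains_1234_or_1243[OF assms] avoid unfolding avoids_def by blast
  qed
next
  assume bounded: "ascent_tops_bounded N \<pi>"
  have "\<not> contains_pattern N \<pi> \<sigma>" if \<sigma>: "\<sigma> = [1,2,3,4] \<or> \<sigma> = [1,2,4,3]" for \<sigma>
  proof
    assume "contains_pattern N \<pi> \<sigma>"
    then obtain a b where "1 \<le> a" "a < b" "b \<le> N" "\<pi> a < \<pi> b" "2 \<le> larger_after N \<pi> b"
      using \<sigma> by (rule contains_1234_or_1243_ascent_top)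
    then show False using bounded unfolding ascent_tops_bounded_def by fastforce
  qed
  then show "avoids N \<pi> [1,2,3,4] \<and> avoids N \<pi> [1,2,4,3]"
    unfolding avoids_def by blast
qed

definition del_cycle :: "nat \<Rightarrow> nat \<Rightarrow> (nat \<Rightarrow> nat) \<Rightarrow> nat \<Rightarrow> nat" where
  "del_cycle N k \<pi> i = (if 1 \<le> i \<and> i \<le> N - 2 then unlift k (\<pi> (lift k i)) else i)"

definition del_fixed :: "nat \<Rightarrow> (nat \<Rightarrow> nat) \<Rightarrow> nat \<Rightarrow> nat" where
  "del_fixed N \<pi> i = (if 1 \<le> i \<and> i \<le> N - 1 then \<pi> (Suc i) - 1 else i)"

lemma involution_image_avoids:
  fixes \<pi> :: "nat \<Rightarrow> nat"
  assumes p: "\<pi> permutes {1..N}" and inv: "\<And>i. \<pi> (\<pi> i) = i"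
    and j: "2 \<le> j" "j \<le> N" "j \<noteq> \<pi> 1"
  shows "2 \<le> \<pi> j \<and> \<pi> j \<le> N \<and> \<pi> j \<noteq> \<pi> 1"
proof -
  have "1 \<le> \<pi> j" "\<pi> j \<le> N" using permutes_range[OF p, of j] j by auto
  moreover have "\<pi> j \<noteq> 1" using inv j by metis
  moreover have "\<pi> j \<noteq> \<pi> 1" using inv[of j] inv[of 1] j by fastforce
  ultimately show ?thesis by auto
qed

lemma permutes_image_1_le:
  fixes \<pi> :: "nat \<Rightarrow> nat"
  assumes "\<pi> permutes {1..N}" "2 \<le> \<pi> 1"
  shows "\<pi> 1 \<le> N"
  using assms permutes_range[of \<pi> N 1] permutes_not_in[of \<pi> "{1..N}" 1] by fastforce

lemma del_cycle_involution:
  assumes p: "\<pi> permutes {1..N}" and inv: "\<And>i. \<pi> (\<pi> i) = i" and k: "\<pi> 1 = k" "2 \<le> k"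
  shows "del_cycle N k \<pi> (del_cycle N k \<pi> i) = i"
proof (cases "1 \<le> i \<and> i \<le> N - 2")
  case True
  have kN: "k \<le> N" using permutes_image_1_le[OF p] k by simp
  have "2 \<le> lift k i \<and> lift k i \<le> N \<and> lift k i \<noteq> k" using lift_range[OF k(2) kN] True by blast
  then have g: "2 \<le> \<pi> (lift k i) \<and> \<pi> (lift k i) \<le> N \<and> \<pi> (lift k i) \<noteq> k"
    using involution_image_avoids[OF p inv] k by blast
  then have "1 \<le> unlift k (\<pi> (lift k i)) \<and> unlift k (\<pi> (lift k i)) \<le> N - 2"
    using unlift_range[of "\<pi> (lift k i)" N k] k kN by auto
  then have "del_cycle N k \<pi> (del_cycle N k \<pi> i) = unlift k (\<pi> (lift k (unlift k (\<pi> (lift k i)))))"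
    using True unfolding del_cycle_def by auto
  also have "\<dots> = i" using lift_unlift g inv by simp
  finally show ?thesis .
qed (auto simp: del_cycle_def)

lemma del_cycle_permutes:
  assumes "\<pi> permutes {1..N}" "\<And>i. \<pi> (\<pi> i) = i" "\<pi> 1 = k" "2 \<le> k"
  shows "del_cycle N k \<pi> permutes {1..N-2}"
  by (rule involution_permutes[OF del_cycle_involution[OF assms]]) (auto simp: del_cycle_def)

lemma add_cycle_del_cycle:
  assumes p: "\<pi> permutes {1..N}" and inv: "\<And>i. \<pi> (\<pi> i) = i" and k: "\<pi> 1 = k" "2 \<le> k"
  shows "add_cycle N k (del_cycle N k \<pi>) = \<pi>"
proof
  fix i
  have kN: "k \<le> N" using permutes_image_1_le[OF p] k by simp
  consider "i = 1" | "i = k" | "i \<noteq> 1" "i \<noteq> k" "2 \<le> i \<and> i \<le> N" | "i \<notin> {1..N}" by force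
  then show "add_cycle N k (del_cycle N k \<pi>) i = \<pi> i"
  proof cases
    case 3
    have "1 \<le> unlift k i \<and> unlift k i \<le> N - 2" using unlift_range[of i N k] 3 k kN by auto
    then have "add_cycle N k (del_cycle N k \<pi>) i = lift k (unlift k (\<pi> (lift k (unlift k i))))"
      using 3 unfolding add_cycle_def del_cycle_def by auto
    also have "\<dots> = \<pi> i" using lift_unlift involution_image_avoids[OF p inv] 3 k by simp
    finally show ?thesis .
  qed (use p k kN inv in \<open>auto simp: add_cycle_def permutes_not_in\<close>)
qed

lemma del_fixed_involution:
  assumes p: "\<pi> permutes {1..N}" and inv: "\<And>i. \<pi> (\<pi> i) = i" and k: "\<pi> 1 = 1"
  shows "del_fixed N \<pi> (del_fixed N \<pi> i) = i"
proof (cases "1 \<le> i \<and> i \<le> N - 1")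
  case True
  then have "2 \<le> \<pi> (Suc i) \<and> \<pi> (Suc i) \<le> N" using involution_image_avoids[OF p inv, of "Suc i"] k by auto
  then show ?thesis using True inv unfolding del_fixed_def by auto
qed (auto simp: del_fixed_def)

lemma del_fixed_permutes:
  assumes "\<pi> permutes {1..N}" "\<And>i. \<pi> (\<pi> i) = i" "\<pi> 1 = 1"
  shows "del_fixed N \<pi> permutes {1..N-1}"
  by (rule involution_permutes[OF del_fixed_involution[OF assms]]) (auto simp: del_fixed_def)

lemma add_fixed_del_fixed:
  assumes p: "\<pi> permutes {1..N}" and inv: "\<And>i. \<pi> (\<pi> i) = i" and k: "\<pi> 1 = 1"
  shows "add_fixed N (del_fixed N \<pi>) = \<pi>"
proof
  fix i
  consider "i = 1" | "2 \<le> i \<and> i \<le> N" | "i \<notin> {1..N}" by force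
  then show "add_fixed N (del_fixed N \<pi>) i = \<pi> i"
  proof cases
    case 2
    then have "2 \<le> \<pi> i" using involution_image_avoids[OF p inv, of i] k by auto
    then show ?thesis using 2 unfolding add_fixed_def del_fixed_def by auto
  qed (use p k in \<open>auto simp: add_fixed_def permutes_not_in\<close>)
qed

lemma ascent_tops_bounded_add_cycleD:
  assumes k: "2 \<le> k" "k \<le> N" and n: "ascent_tops_bounded N (add_cycle N k \<sigma>)"
  shows "ascent_tops_bounded (N-2) \<sigma>"
  unfolding ascent_tops_bounded_def
proof (intro allI impI)
  fix a b assume ab: "1 \<le> a" "a < b" "b \<le> N - 2" "\<sigma> a < \<sigma> b"
  have "add_cycle N k \<sigma> (lift k a) < add_cycle N k \<sigma> (lift k b)" using add_cycle_lift[OF k] ab by simp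
  moreover have "1 \<le> lift k a" "lift k a < lift k b" "lift k b \<le> N" using lift_range[OF k, of a] lift_range[OF k, of b] ab by auto
  ultimately have "larger_after N (add_cycle N k \<sigma>) (lift k b) \<le> 1" using n unfolding ascent_tops_bounded_def by blast
  then show "larger_after (N-2) \<sigma> b \<le> 1" using larger_after_add_cycle_lift[OF k, of b] ab by simp
qed

lemma ascent_tops_bounded_add_fixedD:
  assumes n: "ascent_tops_bounded N (add_fixed N \<sigma>)"
  shows "ascent_tops_bounded (N-1) \<sigma>"
  unfolding ascent_tops_bounded_def
proof (intro allI impI)
  fix a b assume ab: "1 \<le> a" "a < b" "b \<le> N - 1" "\<sigma> a < \<sigma> b"
  have "add_fixed N \<sigma> (Suc a) < add_fixed N \<sigma> (Suc b)" using add_fixed_Suc ab by simp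
  moreover have "1 \<le> Suc a" "Suc a < Suc b" "Suc b \<le> N" using ab by auto
  ultimately have "larger_after N (add_fixed N \<sigma>) (Suc b) \<le> 1" using n unfolding ascent_tops_bounded_def by blast
  then show "larger_after (N-1) \<sigma> b \<le> 1" using larger_after_add_fixed_Suc[of b] ab by simp
qed

lemma nth_pair_word: assumes "1 \<le> w" "w \<le> length A + length B"
  shows "(x # A @ x # B) ! (lift (length A + 2) w - 1) = (A @ B) ! (w - 1)"
proof -
  obtain w' where w: "w = Suc w'" using assms(1) by (cases w) auto
  show ?thesis
  proof (cases "w' < length A")
    case True
    then have "lift (length A + 2) w - 1 = Suc w'" unfolding lift_def w by simp
    then show ?thesis using True w by (simp add: nth_append)
  next
    case False
    then have "lift (length A + 2) w - 1 = Suc (Suc w')" unfolding lift_def w by simp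
    moreover have "Suc w' - length A = Suc (w' - length A)" using False by simp
    ultimately show ?thesis using False w by (simp add: nth_append)
  qed
qed

lemma count_take_pair_word: assumes "1 \<le> v" "v \<le> length A + length B"
  shows "count_list (take (lift (length A + 2) v - 1) (x # A @ x # B)) y =
    count_list (take (v - 1) (A @ B)) y + (if y = x then 1 else 0) + (if y = x \<and> length A < v then 1 else 0)"
proof -
  obtain v' where v: "v = Suc v'" using assms(1) by (cases v) auto
  show ?thesis
  proof (cases "v' < length A")
    case True
    then have "lift (length A + 2) v - 1 = Suc v'" unfolding lift_def v by simp
    then show ?thesis using True v by (simp add: take_append)
  next
    case False
    then have "lift (length A + 2) v - 1 = Suc (Suc v')" unfolding lift_def v by simp
    moreover have "Suc v' - length A = Suc (v' - length A)" using False by simp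
    ultimately show ?thesis using False v by (simp add: take_append)
  qed
qed

lemma count_drop_pair_word: assumes "1 \<le> w" "w \<le> length A + length B"
  shows "count_list (drop (lift (length A + 2) w) (x # A @ x # B)) y =
    count_list (drop w (A @ B)) y + (if y = x \<and> w \<le> length A then 1 else 0)"
proof (cases "w \<le> length A")
  case True
  then have "lift (length A + 2) w = Suc w" unfolding lift_def by simp
  then show ?thesis using True by (simp add: drop_append)
next
  case False
  then have "lift (length A + 2) w = Suc (Suc w)" unfolding lift_def by simp
  moreover have "Suc w - length A = Suc (w - length A)" using False by auto
  ultimately show ?thesis using False by (simp add: drop_append)
qed

lemma nth_append_in_set_right:
  assumes "length A < w" "w \<le> length A + length B"
  shows "(A @ B) ! (w - 1) \<in> set B"
proof -
  obtain t where t: "w = Suc (length A + t)" using assms(1) by (metis less_imp_Suc_add)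
  have "(A @ B) ! (w - 1) = B ! t" unfolding t by (simp add: nth_append_length_plus)
  moreover have "t < length B" using assms(2) t by simp
  ultimately show ?thesis by simp
qed

lemma mirror_pos_pair_word_lift:
  assumes xB: "x \<notin> set B" and c: "mirror_pos (A @ B) v w" and v: "1 \<le> v" "v \<le> length A + length B"
  shows "mirror_pos (x # A @ x # B) (lift (length A + 2) v) (lift (length A + 2) w)"
proof -
  let ?q = "x # A @ x # B" and ?Q = "A @ B" and ?k = "length A + 2"
  have w: "1 \<le> w" "w \<le> length A + length B" "?Q ! (w-1) = ?Q ! (v-1)"
    "count_list (take (v-1) ?Q) (?Q!(v-1)) = count_list (drop w ?Q) (?Q!(v-1))"
    using c unfolding mirror_pos_def by auto
  define y where "y = ?Q ! (v-1)"
  have qi: "?q ! (lift ?k v - 1) = y" using nth_pair_word[OF v] y_def by simp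
  have qw: "?q ! (lift ?k w - 1) = y" using nth_pair_word[OF w(1,2)] w(3) y_def by simp
  have vA: "y = x \<Longrightarrow> v \<le> length A" using nth_append_in_set_right[of A v B] v xB y_def by (metis not_le)
  have wA: "y = x \<Longrightarrow> w \<le> length A" using nth_append_in_set_right[of A w B] w xB y_def by (metis not_le)
  show ?thesis
    unfolding mirror_pos_def
  proof (intro conjI)
    show "1 \<le> lift ?k w" unfolding lift_def by simp
    show "lift ?k w \<le> length ?q" using lift_range[of ?k "length A + length B + 2" w] w by simp
    show "?q ! (lift ?k w - 1) = ?q ! (lift ?k v - 1)" using qi qw by simp
    show "count_list (take (lift ?k v - 1) ?q) (?q ! (lift ?k v - 1)) =
        count_list (drop (lift ?k w) ?q) (?q ! (lift ?k v - 1))"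
      unfolding qi using count_take_pair_word[OF v, of x y] count_drop_pair_word[OF w(1,2), of x y] w(4) vA wA y_def
      by auto
  qed
qed

lemma class_rev_pair_word:
  assumes xB: "x \<notin> set B"
  shows "class_rev (x # A @ x # B) = add_cycle (length A + length B + 2) (length A + 2) (class_rev (A @ B))"
proof
  fix i
  let ?q = "x # A @ x # B" and ?Q = "A @ B" and ?k = "length A + 2" and ?N = "length A + length B + 2"
  consider "\<not> (1 \<le> i \<and> i \<le> ?N)" | "i = 1" | "i = ?k" | "1 \<le> i" "i \<le> ?N" "i \<noteq> 1" "i \<noteq> ?k" by blast
  then show "class_rev ?q i = add_cycle ?N ?k (class_rev ?Q) i"
  proof cases
    case 1
    then show ?thesis using class_rev_outside[of i ?q] unfolding add_cycle_def by auto
  next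
    case 2
    have "mirror_pos ?q 1 ?k" unfolding mirror_pos_def using xB by (simp add: nth_append count_list_0_iff)
    then show ?thesis using class_rev_eqI[of 1 ?q] 2 by simp
  next
    case 3
    have "mirror_pos ?q ?k 1" unfolding mirror_pos_def using xB by (simp add: nth_append count_list_0_iff)
    then show ?thesis using class_rev_eqI[of ?k ?q] 3 by simp
  next
    case 4
    define v where "v = unlift ?k i"
    have v: "1 \<le> v" "v \<le> length A + length B" "i = lift ?k v"
      using unlift_range[of i ?N ?k] lift_unlift[of i ?k] 4 unfolding v_def by auto
    have "mirror_pos ?q i (lift ?k (class_rev ?Q v))"
      using mirror_pos_pair_word_lift[OF xB mirror_pos_class_rev v(1,2)] v by simp
    then have "class_rev ?q i = lift ?k (class_rev ?Q v)" using class_rev_eqI 4 by simp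
    then show ?thesis unfolding add_cycle_def v_def using 4 by simp
  qed
qed

lemma class_rev_Cons_fresh: assumes xQ: "x \<notin> set Q"
  shows "class_rev (x # Q) = add_fixed (length Q + 1) (class_rev Q)"
proof
  fix i
  let ?q = "x # Q" and ?N = "length Q + 1"
  show "class_rev ?q i = add_fixed ?N (class_rev Q) i"
  proof (cases "1 \<le> i \<and> i \<le> ?N")
    case False
    then show ?thesis using class_rev_outside[of i ?q] unfolding add_fixed_def by auto
  next
    case True
    show ?thesis
    proof (cases "i = 1")
      case i1: True
      have "mirror_pos ?q 1 1" unfolding mirror_pos_def using xQ by simp
      then show ?thesis using class_rev_eqI[of 1 ?q] i1 by simp
    next
      case i1: False
      define v where "v = i - 1"
      have v: "1 \<le> v" "v \<le> length Q" "i = Suc v" using True i1 unfolding v_def by auto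
      define w where "w = class_rev Q v"
      have c: "mirror_pos Q v w" unfolding w_def using mirror_pos_class_rev v by simp
      then have w: "1 \<le> w" "w \<le> length Q" "Q ! (w-1) = Q ! (v-1)"
          "count_list (take (v-1) Q) (Q!(v-1)) = count_list (drop w Q) (Q!(v-1))"
        unfolding mirror_pos_def by auto
      have "Q ! (v-1) \<in> set Q" using v by simp
      then have yx: "Q ! (v-1) \<noteq> x" using xQ by auto
      have t: "take (i-1) ?q = x # take (v-1) Q" using v by (cases v) auto
      have n1: "?q ! (Suc w - 1) = Q ! (w-1)" using w by (cases w) auto
      have n2: "?q ! (i - 1) = Q ! (v-1)" using v by (cases v) auto
      have "mirror_pos ?q i (Suc w)"
        unfolding mirror_pos_def using v w yx t n1 n2 by simp
      then have "class_rev ?q i = Suc w" using class_rev_eqI True by simp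
      moreover have "add_fixed ?N (class_rev Q) i = Suc w" unfolding add_fixed_def w_def v_def using True i1 by simp
      ultimately show ?thesis by simp
    qed
  qed
qed

definition letter_of_count :: "nat \<Rightarrow> letter" where
  "letter_of_count c = (if c = 0 then Lh else if c = 1 then Lr else Lu)"

definition letters_by_count :: "letter list \<Rightarrow> bool" where
  "letters_by_count q \<longleftrightarrow> (\<forall>i. 1 \<le> i \<longrightarrow> i \<le> length q \<longrightarrow> q!(i-1) = letter_of_count (larger_after (length q) (class_rev q) i))"

definition admissible :: "letter list \<Rightarrow> bool" where
  "admissible q \<longleftrightarrow> letters_by_count q \<and> ascent_tops_bounded (length q) (class_rev q)"

lemma letter_of_count_eq_Lu:
  "letter_of_count c = Lu \<longleftrightarrow> 2 \<le> c" unfolding letter_of_count_def by auto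

lemma letters_by_count_nth_eq_Lu_iff:
  assumes "letters_by_count q" "1 \<le> b" "b \<le> length q"
  shows "q ! (b-1) = Lu \<longleftrightarrow> 2 \<le> larger_after (length q) (class_rev q) b"
  using assms letter_of_count_eq_Lu unfolding letters_by_count_def by simp

lemma letters_by_count_pair:
  assumes xB: "x \<notin> set B" and xc: "x = letter_of_count (length B)"
    and Q: "letters_by_count (A @ B)"
  shows "letters_by_count (x # A @ x # B)"
  unfolding letters_by_count_def
proof (intro allI impI)
  let ?q = "x # A @ x # B" and ?Q = "A @ B" and ?k = "length A + 2" and ?N = "length A + length B + 2"
  have e: "class_rev ?q = add_cycle ?N ?k (class_rev ?Q)" by (rule class_rev_pair_word[OF xB])
  have s: "class_rev ?Q permutes {1..?N - 2}" using class_rev_permutes[of ?Q] by simp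
  have k: "2 \<le> ?k" "?k \<le> ?N" by auto
  fix i assume i: "1 \<le> i" "i \<le> length ?q"
  consider "i = 1" | "i = ?k" | "i \<noteq> 1" "i \<noteq> ?k" by blast
  then show "?q ! (i-1) = letter_of_count (larger_after (length ?q) (class_rev ?q) i)"
  proof cases
    case 1 then show ?thesis using larger_after_add_cycle_1[OF s k] e xc by simp
  next
    case 2 then show ?thesis using larger_after_add_cycle_k[OF s k] e xc by (simp add: nth_append)
  next
    case 3
    define v where "v = unlift ?k i"
    have v: "1 \<le> v" "v \<le> length A + length B" "i = lift ?k v"
      using unlift_range[of i ?N ?k] lift_unlift[of i ?k] i 3 unfolding v_def by auto
    have "?q ! (i-1) = ?Q ! (v-1)" using nth_pair_word[OF v(1,2)] v(3) by simp
    also have "\<dots> = letter_of_count (larger_after (length ?Q) (class_rev ?Q) v)"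
      using Q v unfolding letters_by_count_def by simp
    also have "\<dots> = letter_of_count (larger_after (length ?q) (class_rev ?q) i)"
      using larger_after_add_cycle_lift[OF k, of v] v e by simp
    finally show ?thesis .
  qed
qed

lemma admissible_pair:
  assumes uB: "Lu \<notin> set B" and xB: "x \<notin> set B" and xc: "x = letter_of_count (length B)"
    and Q: "admissible (A @ B)"
  shows "admissible (x # A @ x # B)"
proof -
  let ?q = "x # A @ x # B" and ?Q = "A @ B" and ?k = "length A + 2" and ?N = "length A + length B + 2"
  have e: "class_rev ?q = add_cycle ?N ?k (class_rev ?Q)" by (rule class_rev_pair_word[OF xB])
  have k: "2 \<le> ?k" "?k \<le> ?N" by auto
  have cq: "letters_by_count ?q"
    using letters_by_count_pair[OF xB xc] Q unfolding admissible_def by blast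
  have inB: "?q ! (b - 1) \<in> set B" if "?k < b" "b \<le> ?N" for b
  proof -
    define t where "t = b - length A - 3"
    have bt: "b = length A + 3 + t" using that unfolding t_def by simp
    then have "?q ! (b - 1) = B ! t" by (simp add: nth_append)
    then show ?thesis using that bt by simp
  qed
  have "larger_after ?N (class_rev ?q) b \<le> 1" if "?k < b" "b \<le> ?N" for b
    using inB[OF that] uB letters_by_count_nth_eq_Lu_iff[OF cq, of b] that by force
  moreover have "larger_after ?N (class_rev ?q) b \<le> 1"
    if "1 \<le> b" "b \<le> ?N" "?k < class_rev ?q b" for b
  proof -
    have "?q ! (class_rev ?q b - 1) \<noteq> Lu"
      using inB[OF that(3)] class_rev_range[of b ?q] that uB by force
    then show ?thesis
      using class_rev_letter[of b ?q] letters_by_count_nth_eq_Lu_iff[OF cq, of b] that by force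
  qed
  ultimately have "ascent_tops_bounded ?N (add_cycle ?N ?k (class_rev ?Q))"
    using ascent_tops_bounded_add_cycle[OF k] Q unfolding admissible_def e by simp
  then show ?thesis using cq e unfolding admissible_def by simp
qed

lemma admissible_Cons:
  assumes uQ: "Lu \<notin> set Q" and xQ: "x \<notin> set Q" and xc: "x = letter_of_count (length Q)"
    and Q: "admissible Q"
  shows "admissible (x # Q)"
proof -
  let ?q = "x # Q" and ?N = "length Q + 1"
  have e: "class_rev ?q = add_fixed ?N (class_rev Q)" by (rule class_rev_Cons_fresh[OF xQ])
  have s: "class_rev Q permutes {1..?N - 1}" using class_rev_permutes[of Q] by simp
  have cq: "letters_by_count ?q" unfolding letters_by_count_def
  proof (intro allI impI)
    fix i assume i: "1 \<le> i" "i \<le> length ?q"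
    show "?q ! (i-1) = letter_of_count (larger_after (length ?q) (class_rev ?q) i)"
    proof (cases "i = 1")
      case True then show ?thesis using larger_after_add_fixed_1[OF s] e xc by simp
    next
      case False
      then obtain v where v: "1 \<le> v" "v \<le> length Q" "i = Suc v" using i by (cases i) auto
      have "?q ! (i-1) = letter_of_count (larger_after (length Q) (class_rev Q) v)"
        using Q v unfolding admissible_def letters_by_count_def by simp
      also have "\<dots> = letter_of_count (larger_after (length ?q) (class_rev ?q) i)"
        using larger_after_add_fixed_Suc[of v] v e by simp
      finally show ?thesis .
    qed
  qed
  have "larger_after ?N (class_rev ?q) b \<le> 1" if "2 \<le> b" "b \<le> ?N" for b
  proof -
    have "?q ! (b-1) \<in> set Q" using that by (cases b) auto
    then have "?q ! (b-1) \<noteq> Lu" using uQ by auto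
    then show ?thesis using letters_by_count_nth_eq_Lu_iff[OF cq, of b] that by simp
  qed
  then have "ascent_tops_bounded ?N (class_rev ?q)" by (rule ascent_tops_boundedI) simp
  then show ?thesis using cq unfolding admissible_def by simp
qed

lemma admissible_Nil: "admissible []"
  unfolding admissible_def letters_by_count_def ascent_tops_bounded_def by auto

definition u_pair_insert :: "letter list \<Rightarrow> letter list \<Rightarrow> bool" where
  "u_pair_insert q0 q \<longleftrightarrow> (\<exists>A B. q0 = A @ B \<and> q = Lu # A @ Lu # B \<and> Lu \<notin> set B \<and> 2 \<le> length B)"

lemma u_pair_insert_take_drop:
  assumes "Lu \<notin> set (drop j q)" "2 \<le> length (drop j q)"
  shows "u_pair_insert q (Lu # take j q @ Lu # drop j q)"
  unfolding u_pair_insert_def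
  by (rule exI[where x = "take j q"], rule exI[where x = "drop j q"]) (use assms in simp)

lemma admissible_u_pair_insert:
  assumes "admissible q0" "u_pair_insert q0 q"
  shows "admissible q"
proof -
  obtain A B where "q0 = A @ B" "q = Lu # A @ Lu # B" "Lu \<notin> set B" "2 \<le> length B"
    using assms(2) unfolding u_pair_insert_def by blast
  then show ?thesis
    using admissible_pair[of B Lu A] assms(1) letter_of_count_eq_Lu[of "length B"] by simp
qed

(* Steps grouped into tokens h, ud, u, d, where u immediately followed by d always forms
   the token ud; fwd_letters is compress on tokens, bwd_letters is compress of the mirror image. *)
datatype tok = TH | TR | TU | TD

fun fwd_letters :: "tok list \<Rightarrow> letter list" where
  "fwd_letters [] = []"
| "fwd_letters (TH # xs) = Lh # fwd_letters xs"
| "fwd_letters (TR # xs) = Lr # fwd_letters xs"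
| "fwd_letters (TU # xs) = Lu # fwd_letters xs"
| "fwd_letters (TD # xs) = fwd_letters xs"

fun bwd_letters :: "tok list \<Rightarrow> letter list" where
  "bwd_letters [] = []"
| "bwd_letters (TH # xs) = Lh # bwd_letters xs"
| "bwd_letters (TR # xs) = Lr # bwd_letters xs"
| "bwd_letters (TU # xs) = bwd_letters xs"
| "bwd_letters (TD # xs) = Lu # bwd_letters xs"

lemma fwd_letters_append[simp]: "fwd_letters (a @ b) = fwd_letters a @ fwd_letters b"
  by (induction a rule: fwd_letters.induct) auto

lemma bwd_letters_append[simp]: "bwd_letters (a @ b) = bwd_letters a @ bwd_letters b"
  by (induction a rule: bwd_letters.induct) auto

fun no_ud :: "tok list \<Rightarrow> bool" where
  "no_ud [] = True"
| "no_ud [x] = True"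
| "no_ud (x # y # xs) = ((x \<noteq> TU \<or> y \<noteq> TD) \<and> no_ud (y # xs))"

lemma no_ud_Cons:
  "no_ud (x # xs) \<longleftrightarrow> no_ud xs \<and> (xs \<noteq> [] \<longrightarrow> \<not> (x = TU \<and> hd xs = TD))"
  by (cases xs) auto

lemma no_ud_append:
  "no_ud (xs @ ys) \<longleftrightarrow> no_ud xs \<and> no_ud ys \<and> (xs \<noteq> [] \<longrightarrow> ys \<noteq> [] \<longrightarrow> \<not> (last xs = TU \<and> hd ys = TD))"
proof (induction xs)
  case Nil then show ?case by simp
next
  case (Cons x xs)
  show ?case
  proof (cases xs)
    case Nil then show ?thesis using Cons by (simp add: no_ud_Cons)
  next
    case (Cons y ys) then show ?thesis using Cons.IH by (auto simp: no_ud_Cons)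
  qed
qed

lemma no_ud_if_TD_notin: "TD \<notin> set xs \<Longrightarrow> no_ud xs"
  by (induction xs rule: no_ud.induct) auto

fun tok_rise :: "tok \<Rightarrow> int" where
  "tok_rise TU = 1" | "tok_rise TD = -1" | "tok_rise TH = 0" | "tok_rise TR = 0"

definition tok_height :: "tok list \<Rightarrow> int" where "tok_height xs = sum_list (map tok_rise xs)"

lemma tok_height_simps[simp]:
  "tok_height [] = 0" "tok_height (t # xs) = tok_rise t + tok_height xs" "tok_height (xs @ ys) = tok_height xs + tok_height ys"
  unfolding tok_height_def by auto

fun stays_above :: "int \<Rightarrow> tok list \<Rightarrow> bool" where
  "stays_above h [] = True"
| "stays_above h (t # xs) = (0 \<le> h + tok_rise t \<and> stays_above (h + tok_rise t) xs)"

lemma stays_above_append: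
  "stays_above h (xs @ ys) \<longleftrightarrow> stays_above h xs \<and> stays_above (h + tok_height xs) ys"
  by (induction xs arbitrary: h) (auto simp: add.assoc)

lemma stays_above_if_TD_notin:
  "TD \<notin> set xs \<Longrightarrow> 0 \<le> h \<Longrightarrow> stays_above h xs"
proof (induction xs arbitrary: h)
  case Nil then show ?case by simp
next
  case (Cons t xs)
  have "0 \<le> tok_rise t" using Cons.prems by (cases t) auto
  then show ?case using Cons by auto
qed

lemma tok_height_nonneg_if_TD_notin: "TD \<notin> set xs \<Longrightarrow> 0 \<le> tok_height xs"
proof (induction xs)
  case Nil then show ?case by simp
next
  case (Cons t xs)
  have "0 \<le> tok_rise t" using Cons.prems by (cases t) auto
  then show ?case using Cons by auto
qed

fun tok_width :: "tok \<Rightarrow> nat" where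
  "tok_width TH = 2" | "tok_width TR = 2" | "tok_width TU = 1" | "tok_width TD = 1"

definition toks_width :: "tok list \<Rightarrow> nat" where "toks_width xs = sum_list (map tok_width xs)"

lemma toks_width_simps[simp]:
  "toks_width [] = 0" "toks_width (t # xs) = tok_width t + toks_width xs" "toks_width (xs @ ys) = toks_width xs + toks_width ys"
  unfolding toks_width_def by auto

lemma length_fwd_bwd_letters: "length (fwd_letters xs) + length (bwd_letters xs) = toks_width xs"
  by (induction xs rule: fwd_letters.induct) auto

abbreviation middle :: "tok list \<Rightarrow> bool" where
  "middle \<mu> \<equiv> \<mu> = [] \<or> \<mu> = [TH] \<or> \<mu> = [TR]"

(* The symmetric path alpha mu mirror(alpha) of length 2n.  If mu is empty, alpha may not end
   with u, as u followed by the mirrored d would be the token ud. *)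
definition half_path :: "nat \<Rightarrow> tok list \<Rightarrow> tok list \<Rightarrow> bool" where
  "half_path n \<alpha> \<mu> \<longleftrightarrow> no_ud \<alpha> \<and> middle \<mu> \<and> (\<mu> = [] \<longrightarrow> \<alpha> \<noteq> [] \<longrightarrow> last \<alpha> \<noteq> TU)
     \<and> stays_above 0 \<alpha> \<and> 2 * toks_width \<alpha> + toks_width \<mu> = 2 * n"

definition core_word :: "tok list \<Rightarrow> tok list \<Rightarrow> letter list" where
  "core_word \<alpha> \<mu> = fwd_letters \<alpha> @ fwd_letters \<mu> @ rev (bwd_letters \<alpha>)"

definition path_word :: "tok list \<Rightarrow> tok list \<Rightarrow> letter list" where
  "path_word \<alpha> \<mu> = core_word \<alpha> \<mu> @ [Lh]"

lemma path_word_length: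
  "half_path n \<alpha> \<mu> \<Longrightarrow> length (path_word \<alpha> \<mu>) = n + 1"
proof -
  assume v: "half_path n \<alpha> \<mu>"
  have "length (fwd_letters \<mu>) * 2 = toks_width \<mu>" using v unfolding half_path_def by auto
  then show ?thesis using v length_fwd_bwd_letters[of \<alpha>] unfolding half_path_def path_word_def core_word_def by simp
qed

lemma core_word_TH:
  "core_word (TH # \<rho>) \<mu> = Lh # core_word \<rho> \<mu> @ [Lh]" unfolding core_word_def by simp

lemma core_word_TR:
  "core_word (TR # \<rho>) \<mu> = Lr # core_word \<rho> \<mu> @ [Lr]" unfolding core_word_def by simp

lemma core_word_TU:
  "core_word (TU # \<rho>) \<mu> = Lu # core_word \<rho> \<mu>" unfolding core_word_def by simp

lemma core_word_TD:
  "core_word (TD # \<rho>) \<mu> = core_word \<rho> \<mu> @ [Lu]" unfolding core_word_def by simp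

lemma Lu_notin_fwd_letters_iff: "Lu \<notin> set (fwd_letters xs) \<longleftrightarrow> TU \<notin> set xs"
  by (induction xs rule: fwd_letters.induct) auto

lemma Lu_notin_bwd_letters_iff: "Lu \<notin> set (bwd_letters xs) \<longleftrightarrow> TD \<notin> set xs"
  by (induction xs rule: bwd_letters.induct) auto

lemma toks_width_eq_0: assumes "toks_width xs = 0" shows "xs = []"
proof (cases xs)
  case (Cons t ys) then show ?thesis using assms by (cases t) auto
qed auto

lemma half_path_Cons_TH:
  assumes "half_path n (TH # \<rho>) \<mu>"
  shows "2 \<le> n" "half_path (n-2) \<rho> \<mu>"
proof -
  show "2 \<le> n" using assms unfolding half_path_def by simp
  show "half_path (n-2) \<rho> \<mu>" using assms unfolding half_path_def by (auto simp: no_ud_Cons)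
qed

lemma half_path_Cons_TR:
  assumes "half_path n (TR # \<rho>) \<mu>"
  shows "2 \<le> n" "half_path (n-2) \<rho> \<mu>"
proof -
  show "2 \<le> n" using assms unfolding half_path_def by simp
  show "half_path (n-2) \<rho> \<mu>" using assms unfolding half_path_def by (auto simp: no_ud_Cons)
qed

lemma not_half_path_Cons_TD: "\<not> half_path n (TD # \<rho>) \<mu>"
  unfolding half_path_def by simp

lemma path_word_TH: "path_word (TH # \<rho>) \<mu> = Lh # path_word \<rho> \<mu> @ Lh # []"
  unfolding path_word_def core_word_TH by simp

lemma path_word_TR: "path_word (TR # \<rho>) \<mu> = Lr # core_word \<rho> \<mu> @ Lr # [Lh]"
  unfolding path_word_def core_word_TR by simp

lemma path_word_TU: "path_word (TU # \<rho>) \<mu> = Lu # path_word \<rho> \<mu>"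
  unfolding path_word_def core_word_TU by simp

lemma bwd_letters_neq_Nil:
  "xs \<noteq> [] \<Longrightarrow> last xs \<in> {TH, TR} \<Longrightarrow> bwd_letters xs \<noteq> []"
proof -
  assume a: "xs \<noteq> []" "last xs \<in> {TH, TR}"
  then have "xs = butlast xs @ [last xs]" by simp
  then have "bwd_letters xs = bwd_letters (butlast xs) @ bwd_letters [last xs]" by (metis bwd_letters_append)
  then show ?thesis using a(2) by auto
qed

lemma length_fwd_letters_if_TD_notin:
  "TD \<notin> set xs \<Longrightarrow> length (fwd_letters xs) = length xs"
  by (induction xs rule: fwd_letters.induct) auto

lemma u_pair_insert_TU_TD:
  assumes v: "half_path n (TU # \<beta>1 @ TD # \<beta>2) \<mu>" and nd: "TD \<notin> set \<beta>1"
  shows "2 \<le> n" "half_path (n-2) (\<beta>1 @ \<beta>2) \<mu>"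
    "u_pair_insert (path_word (\<beta>1 @ \<beta>2) \<mu>) (path_word (TU # \<beta>1 @ TD # \<beta>2) \<mu>)"
proof -
  have gd: "no_ud (TU # \<beta>1 @ TD # \<beta>2)" and bal: "stays_above 0 (TU # \<beta>1 @ TD # \<beta>2)"
    and mu: "middle \<mu>" and wid: "2 * toks_width (TU # \<beta>1 @ TD # \<beta>2) + toks_width \<mu> = 2 * n"
    using v unfolding half_path_def by auto
  have b1: "\<beta>1 \<noteq> []" using gd by auto
  have g1: "no_ud \<beta>1" "no_ud (TD # \<beta>2)" "last \<beta>1 \<noteq> TU"
    using gd b1 unfolding no_ud_Cons[of TU] no_ud_append by auto
  have "last \<beta>1 \<noteq> TD" using b1 nd last_in_set by metis
  then have lb1: "last \<beta>1 \<in> {TH, TR}" using g1(3) by (cases "last \<beta>1") auto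
  show "2 \<le> n" using wid by simp
  have "stays_above (tok_height \<beta>1) \<beta>2" using bal by (simp add: stays_above_append)
  moreover have "stays_above 0 \<beta>1" using stays_above_if_TD_notin[OF nd] by simp
  ultimately have "stays_above 0 (\<beta>1 @ \<beta>2)" by (simp add: stays_above_append)
  moreover have "no_ud (\<beta>1 @ \<beta>2)" using g1 b1 unfolding no_ud_append by (auto simp: no_ud_Cons)
  moreover have "\<mu> = [] \<longrightarrow> last (\<beta>1 @ \<beta>2) \<noteq> TU"
    using v g1(3) b1 unfolding half_path_def by (cases "\<beta>2 = []") auto
  ultimately show "half_path (n-2) (\<beta>1 @ \<beta>2) \<mu>" using mu wid unfolding half_path_def by auto
  define A where "A = fwd_letters \<beta>1 @ fwd_letters \<beta>2 @ fwd_letters \<mu> @ rev (bwd_letters \<beta>2)"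
  define B where "B = rev (bwd_letters \<beta>1) @ [Lh]"
  have "Lu \<notin> set B" unfolding B_def using Lu_notin_bwd_letters_iff[of \<beta>1] nd by simp
  moreover have "2 \<le> length B" unfolding B_def using bwd_letters_neq_Nil[OF b1 lb1] by (cases "bwd_letters \<beta>1") auto
  ultimately show "u_pair_insert (path_word (\<beta>1 @ \<beta>2) \<mu>) (path_word (TU # \<beta>1 @ TD # \<beta>2) \<mu>)"
    unfolding u_pair_insert_def path_word_def core_word_def A_def B_def
    by (intro exI[of _ A] exI[of _ B]) (simp add: A_def B_def)
qed

lemma half_path_TU_TD_insert:
  assumes v: "half_path m (\<beta>1 @ \<beta>2) \<mu>" and nd1: "TD \<notin> set \<beta>1" and b1: "\<beta>1 \<noteq> []" "last \<beta>1 \<noteq> TU"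
  shows "half_path (m+2) (TU # \<beta>1 @ TD # \<beta>2) \<mu>"
  unfolding half_path_def
proof (intro conjI)
  have gd: "no_ud (\<beta>1 @ \<beta>2)" and bal: "stays_above 0 (\<beta>1 @ \<beta>2)"
    using v unfolding half_path_def by auto
  have "hd \<beta>1 \<noteq> TD" using b1(1) nd1 hd_in_set by metis
  moreover have "no_ud \<beta>1" "no_ud \<beta>2" using gd unfolding no_ud_append by auto
  ultimately show "no_ud (TU # \<beta>1 @ TD # \<beta>2)" unfolding no_ud_Cons no_ud_append using b1 by (simp add: no_ud_Cons)
  show "middle \<mu>" using v unfolding half_path_def by simp
  show "\<mu> = [] \<longrightarrow> TU # \<beta>1 @ TD # \<beta>2 \<noteq> [] \<longrightarrow> last (TU # \<beta>1 @ TD # \<beta>2) \<noteq> TU"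
    using v b1 unfolding half_path_def by (cases "\<beta>2 = []") auto
  have "stays_above (tok_height \<beta>1) \<beta>2" using bal unfolding stays_above_append by simp
  then show "stays_above 0 (TU # \<beta>1 @ TD # \<beta>2)"
    using stays_above_if_TD_notin[OF nd1] tok_height_nonneg_if_TD_notin[OF nd1] by (simp add: stays_above_append)
  show "2 * toks_width (TU # \<beta>1 @ TD # \<beta>2) + toks_width \<mu> = 2 * (m + 2)"
    using v unfolding half_path_def by simp
qed

lemma u_pair_insert_TU_TU:
  assumes v: "half_path n (TU # \<beta>1 @ TU # \<beta>2) \<mu>" and nd: "TD \<notin> set (\<beta>1 @ \<beta>2)" and nu: "TU \<notin> set \<beta>2"
  shows "2 \<le> n" "half_path (n-2) (\<beta>1 @ \<beta>2) \<mu>"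
    "u_pair_insert (path_word (\<beta>1 @ \<beta>2) \<mu>) (path_word (TU # \<beta>1 @ TU # \<beta>2) \<mu>)"
proof -
  have mu: "middle \<mu>" and lst: "\<mu> = [] \<longrightarrow> last (TU # \<beta>1 @ TU # \<beta>2) \<noteq> TU"
    and wid: "2 * toks_width (TU # \<beta>1 @ TU # \<beta>2) + toks_width \<mu> = 2 * n"
    using v unfolding half_path_def by auto
  have b2: "\<beta>2 \<noteq> [] \<or> \<mu> \<noteq> []" using lst by auto
  show "2 \<le> n" using wid by simp
  have "\<mu> = [] \<longrightarrow> \<beta>1 @ \<beta>2 \<noteq> [] \<longrightarrow> last (\<beta>1 @ \<beta>2) \<noteq> TU"
    using b2 nu last_in_set by fastforce
  then show "half_path (n-2) (\<beta>1 @ \<beta>2) \<mu>"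
    using mu wid no_ud_if_TD_notin[OF nd] stays_above_if_TD_notin[OF nd] unfolding half_path_def by auto
  define B where "B = fwd_letters \<beta>2 @ fwd_letters \<mu> @ rev (bwd_letters \<beta>2) @ rev (bwd_letters \<beta>1) @ [Lh]"
  have "Lu \<notin> set B" unfolding B_def
    using Lu_notin_bwd_letters_iff[of \<beta>1] Lu_notin_bwd_letters_iff[of \<beta>2] Lu_notin_fwd_letters_iff[of \<beta>2] nu nd mu by auto
  moreover have "2 \<le> length B"
  proof (cases "\<beta>2 = []")
    case True then have "fwd_letters \<mu> \<noteq> []" using b2 mu by auto
    then show ?thesis unfolding B_def by (cases "fwd_letters \<mu>") auto
  next
    case False then have "fwd_letters \<beta>2 \<noteq> []" using length_fwd_letters_if_TD_notin[of \<beta>2] nd by auto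
    then show ?thesis unfolding B_def by (cases "fwd_letters \<beta>2") auto
  qed
  ultimately show "u_pair_insert (path_word (\<beta>1 @ \<beta>2) \<mu>) (path_word (TU # \<beta>1 @ TU # \<beta>2) \<mu>)"
    unfolding u_pair_insert_def path_word_def core_word_def
    by (intro exI[of _ "fwd_letters \<beta>1"] exI[of _ B]) (simp add: B_def)
qed

lemma half_path_TU_unpaired:
  assumes v: "half_path n (TU # \<rho>) \<mu>" and nd: "TD \<notin> set \<rho>" and nu: "TU \<notin> set \<rho>"
  shows "2 \<le> n" "half_path (n-1) \<rho> \<mu>" "Lu \<notin> set (path_word \<rho> \<mu>)"
proof -
  have mu: "middle \<mu>" and lst: "\<mu> = [] \<longrightarrow> last (TU # \<rho>) \<noteq> TU"
    and wid: "2 * toks_width (TU # \<rho>) + toks_width \<mu> = 2 * n"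
    using v unfolding half_path_def by auto
  show "half_path (n-1) \<rho> \<mu>"
    using mu lst wid no_ud_if_TD_notin[OF nd] stays_above_if_TD_notin[OF nd] unfolding half_path_def by auto
  have "\<rho> \<noteq> [] \<or> \<mu> \<noteq> []" using lst by auto
  then have "toks_width \<rho> \<noteq> 0 \<or> toks_width \<mu> \<noteq> 0" using toks_width_eq_0 by blast
  then show "2 \<le> n" using wid by auto
  show "Lu \<notin> set (path_word \<rho> \<mu>)" unfolding path_word_def core_word_def
    using Lu_notin_fwd_letters_iff[of \<rho>] Lu_notin_bwd_letters_iff[of \<rho>] nu nd mu by auto
qed

lemma half_path_TU_cases:
  assumes v: "half_path n (TU # \<rho>) \<mu>"
  obtains \<alpha>0 where "2 \<le> n" "half_path (n-2) \<alpha>0 \<mu>" "u_pair_insert (path_word \<alpha>0 \<mu>) (path_word (TU # \<rho>) \<mu>)"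
  | "2 \<le> n" "half_path (n-1) \<rho> \<mu>" "Lu \<notin> set (path_word \<rho> \<mu>)"
proof (cases "TD \<in> set \<rho>")
  case True
  then obtain \<beta>1 \<beta>2 where "\<rho> = \<beta>1 @ TD # \<beta>2" "TD \<notin> set \<beta>1"
    using split_list_first by metis
  then show ?thesis using that(1) u_pair_insert_TU_TD v by blast
next
  case nd: False
  show ?thesis
  proof (cases "TU \<in> set \<rho>")
    case True
    then obtain \<beta>1 \<beta>2 where "\<rho> = \<beta>1 @ TU # \<beta>2" "TU \<notin> set \<beta>2"
      using split_list_last by metis
    then show ?thesis using that(1) u_pair_insert_TU_TU[of n \<beta>1 \<beta>2 \<mu>] v nd by auto
  next
    case False
    then show ?thesis using that(2) half_path_TU_unpaired[OF v nd] by blast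
  qed
qed

lemma admissible_path_word_Nil:
  assumes "middle \<mu>" shows "admissible (path_word [] \<mu>)"
proof -
  have Lh: "admissible [Lh]" using admissible_Cons[OF _ _ _ admissible_Nil] by (simp add: letter_of_count_def)
  moreover have "admissible (Lh # [] @ Lh # [])"
    by (rule admissible_pair) (auto simp: letter_of_count_def admissible_Nil)
  moreover have "admissible (Lr # [Lh])" by (rule admissible_Cons) (auto simp: letter_of_count_def Lh)
  ultimately show ?thesis using assms by (auto simp: path_word_def core_word_def)
qed

lemma half_path_admissible:
  "half_path n \<alpha> \<mu> \<Longrightarrow> admissible (path_word \<alpha> \<mu>)"
proof (induction n arbitrary: \<alpha> \<mu> rule: less_induct)
  case (less n)
  show ?case
  proof (cases \<alpha>)
    case Nil
    then show ?thesis using admissible_path_word_Nil less.prems unfolding half_path_def by blast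
  next
    case (Cons t \<rho>)
    show ?thesis
    proof (cases t)
      case TH
      then have n: "2 \<le> n" "half_path (n-2) \<rho> \<mu>" using half_path_Cons_TH less.prems Cons by auto
      have "admissible (path_word \<rho> \<mu> @ [])" using less.IH[OF _ n(2)] n(1) by simp
      then have "admissible (Lh # path_word \<rho> \<mu> @ Lh # [])"
        by (rule admissible_pair[rotated 3]) (auto simp: letter_of_count_def)
      then show ?thesis using Cons TH path_word_TH by simp
    next
      case TR
      then have n: "2 \<le> n" "half_path (n-2) \<rho> \<mu>" using half_path_Cons_TR less.prems Cons by auto
      have "admissible (core_word \<rho> \<mu> @ [Lh])" using less.IH[OF _ n(2)] n(1) by (simp add: path_word_def)
      then have "admissible (Lr # core_word \<rho> \<mu> @ Lr # [Lh])"
        by (rule admissible_pair[rotated 3]) (auto simp: letter_of_count_def)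
      then show ?thesis using Cons TR path_word_TR by simp
    next
      case TD
      then show ?thesis using less.prems Cons not_half_path_Cons_TD by simp
    next
      case TU
      from less.prems[unfolded Cons TU] show ?thesis
      proof (cases rule: half_path_TU_cases)
        case (1 \<alpha>0)
        then show ?thesis using less.IH[of "n-2"] admissible_u_pair_insert Cons TU by auto
      next
        case 2
        have "admissible (path_word \<rho> \<mu>)" using less.IH[of "n-1"] 2 by simp
        moreover have "Lu = letter_of_count (length (path_word \<rho> \<mu>))"
          using path_word_length[OF 2(2)] 2(1) by (simp add: letter_of_count_def)
        ultimately have "admissible (Lu # path_word \<rho> \<mu>)" using admissible_Cons[OF 2(3) 2(3)] by simp
        then show ?thesis using Cons TU path_word_TU by simp
      qed
    qed
  qed
qed

definition half_shape :: "tok list \<Rightarrow> tok list \<Rightarrow> bool" where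
  "half_shape \<alpha> \<mu> \<longleftrightarrow> no_ud \<alpha> \<and> middle \<mu> \<and> (\<mu> = [] \<longrightarrow> \<alpha> \<noteq> [] \<longrightarrow> last \<alpha> \<noteq> TU)"

lemma half_shape_tl: "half_shape (t # \<rho>) \<mu> \<Longrightarrow> half_shape \<rho> \<mu>"
  unfolding half_shape_def by (auto simp: no_ud_Cons)

lemma hd_bwd_letters_neq_Lu:
  "no_ud (TU # \<rho>) \<Longrightarrow> bwd_letters \<rho> \<noteq> [] \<Longrightarrow> hd (bwd_letters \<rho>) \<noteq> Lu"
proof (induction \<rho>)
  case Nil then show ?case by simp
next
  case (Cons t \<rho>)
  show ?case
  proof (cases t)
    case TU
    have "no_ud (TU # \<rho>)" using Cons.prems TU by (auto simp: no_ud_Cons)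
    then show ?thesis using Cons TU by simp
  qed (use Cons in auto)
qed

lemma bwd_letters_eq_Nil:
  "bwd_letters \<rho> = [] \<Longrightarrow> t \<in> set \<rho> \<Longrightarrow> t = TU"
  by (induction \<rho> rule: bwd_letters.induct) auto

lemma last_core_word_TU:
  assumes "half_shape (TU # \<rho>) \<mu>"
  shows "last (core_word (TU # \<rho>) \<mu>) \<noteq> Lu"
proof (cases "bwd_letters \<rho> = []")
  case False
  have "last (core_word (TU # \<rho>) \<mu>) = hd (bwd_letters \<rho>)" unfolding core_word_def using False by (simp add: last_rev)
  then show ?thesis using hd_bwd_letters_neq_Lu False assms unfolding half_shape_def by simp
next
  case True
  have mu: "middle \<mu>" using assms unfolding half_shape_def by simp
  show ?thesis
  proof (cases "\<mu> = []")
    case True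
    have "last (TU # \<rho>) = TU"
    proof (cases "\<rho> = []")
      case False then have "last \<rho> \<in> set \<rho>" by simp
      then show ?thesis using bwd_letters_eq_Nil[OF \<open>bwd_letters \<rho> = []\<close>] False by simp
    qed simp
    then show ?thesis using assms True unfolding half_shape_def by simp
  next
    case False
    then show ?thesis using mu True unfolding core_word_def by auto
  qed
qed

lemma core_word_Nil_neq_Cons:
  assumes "middle \<mu>" shows "core_word [] \<mu> \<noteq> core_word (t # \<rho>) \<mu>'"
proof
  assume e: "core_word [] \<mu> = core_word (t # \<rho>) \<mu>'"
  have "core_word [] \<mu> = fwd_letters \<mu>" by (simp add: core_word_def)
  then have "length (core_word (t # \<rho>) \<mu>') \<le> 1" "Lu \<notin> set (core_word (t # \<rho>) \<mu>')"
    using e assms by auto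
  then show False by (cases t) (simp_all add: core_word_TH core_word_TR core_word_TU core_word_TD)
qed

lemma core_word_Cons_eq_Cons:
  assumes "half_shape (t # \<rho>) \<mu>" "half_shape (t' # \<rho>') \<mu>'"
    and "core_word (t # \<rho>) \<mu> = core_word (t' # \<rho>') \<mu>'"
  shows "t = t'"
proof -
  have hds: "hd (core_word (TH # r) m) = Lh" "hd (core_word (TR # r) m) = Lr" "hd (core_word (TU # r) m) = Lu" for r m
    by (simp_all add: core_word_TH core_word_TR core_word_TU)
  have lasts: "last (core_word (TH # r) m) = Lh" "last (core_word (TR # r) m) = Lr" "last (core_word (TD # r) m) = Lu" for r m
    by (simp_all add: core_word_TH core_word_TR core_word_TD)
  have "t = TU \<Longrightarrow> last (core_word (t # \<rho>) \<mu>) \<noteq> Lu" "t' = TU \<Longrightarrow> last (core_word (t' # \<rho>') \<mu>') \<noteq> Lu"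
    using last_core_word_TU assms(1,2) by auto
  then show ?thesis using assms(3) hds lasts by (cases t; cases t') (metis letter.distinct)+
qed

lemma core_word_inj:
  "half_shape \<alpha> \<mu> \<Longrightarrow> half_shape \<alpha>' \<mu>' \<Longrightarrow> core_word \<alpha> \<mu> = core_word \<alpha>' \<mu>' \<Longrightarrow> \<alpha> = \<alpha>' \<and> \<mu> = \<mu>'"
proof (induction \<alpha> arbitrary: \<alpha>')
  case Nil
  then have mu: "middle \<mu>" "middle \<mu>'" unfolding half_shape_def by auto
  show ?case
  proof (cases \<alpha>')
    case Nil
    then have "fwd_letters \<mu> = fwd_letters \<mu>'" using Nil.prems(3) unfolding core_word_def by simp
    then show ?thesis using Nil mu by auto
  qed (use Nil.prems mu core_word_Nil_neq_Cons in blast)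
next
  case (Cons t \<rho>)
  show ?case
  proof (cases \<alpha>')
    case Nil
    then show ?thesis using Cons.prems core_word_Nil_neq_Cons unfolding half_shape_def by metis
  next
    case (Cons t' \<rho>')
    note prems = Cons.prems[unfolded Cons]
    have tt: "t = t'" using core_word_Cons_eq_Cons[OF prems] .
    have "core_word \<rho> \<mu> = core_word \<rho>' \<mu>'"
      using prems(3) tt by (cases t) (auto simp: core_word_TH core_word_TR core_word_TU core_word_TD)
    then show ?thesis using Cons.IH[OF half_shape_tl[OF prems(1)] half_shape_tl[OF prems(2)]] Cons tt by simp
  qed
qed

lemma half_path_half_shape:
  "half_path n \<alpha> \<mu> \<Longrightarrow> half_shape \<alpha> \<mu>" unfolding half_path_def half_shape_def by simp

lemma path_word_inj:
  "half_path n \<alpha> \<mu> \<Longrightarrow> half_path n' \<alpha>' \<mu>' \<Longrightarrow> path_word \<alpha> \<mu> = path_word \<alpha>' \<mu>' \<Longrightarrow> \<alpha> = \<alpha>' \<and> \<mu> = \<mu>'"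
  using core_word_inj[OF half_path_half_shape half_path_half_shape] unfolding path_word_def by blast

lemma fwd_letters_take:
  "TD \<notin> set xs \<Longrightarrow> fwd_letters (take j xs) = take j (fwd_letters xs)"
proof (induction xs arbitrary: j)
  case Nil then show ?case by simp
next
  case (Cons t xs)
  show ?case
  proof (cases j)
    case (Suc j') then show ?thesis using Cons by (cases t) auto
  qed simp
qed

lemma fwd_letters_drop:
  "TD \<notin> set xs \<Longrightarrow> fwd_letters (drop j xs) = drop j (fwd_letters xs)"
proof (induction xs arbitrary: j)
  case Nil then show ?case by simp
next
  case (Cons t xs)
  show ?case
  proof (cases j)
    case (Suc j') then show ?thesis using Cons by (cases t) auto
  qed simp
qed

lemma bwd_letters_Cons_nonTU:
  "t \<noteq> TU \<Longrightarrow> \<exists>l. bwd_letters (t # xs) = l # bwd_letters xs"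
  by (cases t) auto

lemma bwd_letters_prefix_exists:
  "1 \<le> c \<Longrightarrow> c \<le> length (bwd_letters xs) \<Longrightarrow>
  \<exists>i \<le> length xs. bwd_letters (take i xs) = take c (bwd_letters xs) \<and> take i xs \<noteq> [] \<and> last (take i xs) \<noteq> TU"
proof (induction xs arbitrary: c)
  case Nil then show ?case by simp
next
  case (Cons t xs)
  show ?case
  proof (cases "t = TU")
    case True
    then have "c \<le> length (bwd_letters xs)" using Cons.prems by simp
    then obtain i where i: "i \<le> length xs" "bwd_letters (take i xs) = take c (bwd_letters xs)" "take i xs \<noteq> []" "last (take i xs) \<noteq> TU"
      using Cons.IH Cons.prems(1) by blast
    then show ?thesis using True by (intro exI[of _ "Suc i"]) auto
  next
    case False
    obtain l where l: "bwd_letters (t # xs) = l # bwd_letters xs" using bwd_letters_Cons_nonTU[OF False] by blast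
    show ?thesis
    proof (cases "c = 1")
      case True
      then show ?thesis using False l by (intro exI[of _ 1]) (cases t; auto)
    next
      case c1: False
      then have "1 \<le> c - 1" "c - 1 \<le> length (bwd_letters xs)" using Cons.prems l by auto
      then obtain i where i: "i \<le> length xs" "bwd_letters (take i xs) = take (c-1) (bwd_letters xs)" "take i xs \<noteq> []" "last (take i xs) \<noteq> TU"
        using Cons.IH by blast
      have "bwd_letters (take (Suc i) (t # xs)) = l # take (c-1) (bwd_letters xs)" using l i(2) by (cases t) auto
      also have "\<dots> = take c (bwd_letters (t # xs))" using l c1 Cons.prems(1) by (cases c) auto
      finally show ?thesis using i by (intro exI[of _ "Suc i"]) auto
    qed
  qed
qed

lemma insert_pair_front:
  assumes v: "half_path m \<alpha>0 \<mu>" and nu: "Lu \<notin> set (drop j (path_word \<alpha>0 \<mu>))"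
    and j: "j < length (fwd_letters \<alpha>0) \<or> (j = length (fwd_letters \<alpha>0) \<and> \<mu> \<noteq> [])"
  defines "\<alpha> \<equiv> TU # take j \<alpha>0 @ TU # drop j \<alpha>0"
  shows "half_path (m+2) \<alpha> \<mu>"
    "path_word \<alpha> \<mu> = Lu # take j (path_word \<alpha>0 \<mu>) @ Lu # drop j (path_word \<alpha>0 \<mu>)"
proof -
  let ?X0 = "fwd_letters \<alpha>0" and ?M = "fwd_letters \<mu>" and ?Y0 = "bwd_letters \<alpha>0"
  have q0: "path_word \<alpha>0 \<mu> = ?X0 @ ?M @ rev ?Y0 @ [Lh]" unfolding path_word_def core_word_def by simp
  have mu: "middle \<mu>" and wid: "2 * toks_width \<alpha>0 + toks_width \<mu> = 2 * m"
    using v unfolding half_path_def by auto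
  have jX: "j \<le> length ?X0" using j by auto
  have dq: "drop j (path_word \<alpha>0 \<mu>) = drop j ?X0 @ ?M @ rev ?Y0 @ [Lh]" unfolding q0 using jX by simp
  have "Lu \<notin> set ?Y0" using nu dq by simp
  then have nd: "TD \<notin> set \<alpha>0" using Lu_notin_bwd_letters_iff by blast
  have "set (take j \<alpha>0) \<union> set (drop j \<alpha>0) = set \<alpha>0" by (metis set_append append_take_drop_id)
  then have ndA: "TD \<notin> set \<alpha>" unfolding \<alpha>_def using nd by auto
  have "bwd_letters (take j \<alpha>0) @ bwd_letters (drop j \<alpha>0) = ?Y0"
    using bwd_letters_append[of "take j \<alpha>0" "drop j \<alpha>0"] by simp
  then show "path_word \<alpha> \<mu> = Lu # take j (path_word \<alpha>0 \<mu>) @ Lu # drop j (path_word \<alpha>0 \<mu>)"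
    unfolding \<alpha>_def path_word_def core_word_def dq[unfolded path_word_def core_word_def]
    using jX fwd_letters_take[OF nd] fwd_letters_drop[OF nd] by (simp flip: rev_append)
  have "\<mu> = [] \<longrightarrow> last \<alpha> \<noteq> TU"
  proof
    assume "\<mu> = []"
    then have "drop j \<alpha>0 \<noteq> []" using j length_fwd_letters_if_TD_notin[OF nd] by simp
    moreover have "Lu \<notin> set (fwd_letters (drop j \<alpha>0))" using nu dq fwd_letters_drop[OF nd] by simp
    then have "TU \<notin> set (drop j \<alpha>0)" using Lu_notin_fwd_letters_iff by blast
    moreover have "last \<alpha> = last (drop j \<alpha>0)" using calculation(1) unfolding \<alpha>_def by simp
    ultimately show "last \<alpha> \<noteq> TU" using last_in_set by metis
  qed
  moreover have "toks_width \<alpha> = toks_width \<alpha>0 + 2"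
    unfolding \<alpha>_def using toks_width_simps(3)[of "take j \<alpha>0" "drop j \<alpha>0"] by simp
  ultimately show "half_path (m+2) \<alpha> \<mu>"
    using mu wid no_ud_if_TD_notin[OF ndA] stays_above_if_TD_notin[OF ndA] unfolding half_path_def by simp
qed

lemma insert_pair_back:
  assumes v: "half_path m \<alpha>0 \<mu>" and nu: "Lu \<notin> set (drop j (path_word \<alpha>0 \<mu>))"
    and jge: "length (fwd_letters \<alpha>0) + length (fwd_letters \<mu>) \<le> j" and jl: "j + 2 \<le> length (path_word \<alpha>0 \<mu>)"
  shows "\<exists>\<alpha>. half_path (m+2) \<alpha> \<mu> \<and>
    path_word \<alpha> \<mu> = Lu # take j (path_word \<alpha>0 \<mu>) @ Lu # drop j (path_word \<alpha>0 \<mu>)"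
proof -
  let ?X0 = "fwd_letters \<alpha>0" and ?M = "fwd_letters \<mu>" and ?Y0 = "bwd_letters \<alpha>0"
  have q0: "path_word \<alpha>0 \<mu> = ?X0 @ ?M @ rev ?Y0 @ [Lh]" unfolding path_word_def core_word_def by simp
  define s where "s = j - length ?X0 - length ?M"
  have js: "j = length (?X0 @ ?M) + s" using jge unfolding s_def by simp
  have sY: "s < length ?Y0" using jl jge unfolding q0 s_def by simp
  define c where "c = length ?Y0 - s"
  have c: "1 \<le> c" "c \<le> length ?Y0" using sY unfolding c_def by auto
  have dq: "drop j (path_word \<alpha>0 \<mu>) = rev (take c ?Y0) @ [Lh]"
    unfolding q0 js c_def using sY by (simp add: drop_rev)
  have tq: "take j (path_word \<alpha>0 \<mu>) = ?X0 @ ?M @ rev (drop c ?Y0)"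
    unfolding q0 js c_def using sY by (simp add: take_rev)
  (* The second u is the mirror image of a d inserted after a prefix of alpha0 whose mirrored
     letters are exactly the tail after position j. *)
  obtain i where i: "bwd_letters (take i \<alpha>0) = take c ?Y0" "take i \<alpha>0 \<noteq> []" "last (take i \<alpha>0) \<noteq> TU"
    using bwd_letters_prefix_exists[OF c] by blast
  define \<beta>1 where "\<beta>1 = take i \<alpha>0"
  define \<beta>2 where "\<beta>2 = drop i \<alpha>0"
  have a0: "\<alpha>0 = \<beta>1 @ \<beta>2" unfolding \<beta>1_def \<beta>2_def by simp
  have Y1: "bwd_letters \<beta>1 = take c ?Y0" using i(1) unfolding \<beta>1_def .
  have "length (bwd_letters \<beta>1) = c" using Y1 c(2) by simp
  then have Y2: "bwd_letters \<beta>2 = drop c ?Y0" unfolding a0 by simp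
  have "Lu \<notin> set (bwd_letters \<beta>1)" using nu dq Y1 by simp
  then have nd1: "TD \<notin> set \<beta>1" using Lu_notin_bwd_letters_iff by blast
  have b1: "\<beta>1 \<noteq> []" "last \<beta>1 \<noteq> TU" using i unfolding \<beta>1_def by auto
  define \<alpha> where "\<alpha> = TU # \<beta>1 @ TD # \<beta>2"
  have X: "fwd_letters \<alpha>0 = fwd_letters \<beta>1 @ fwd_letters \<beta>2" unfolding a0 by simp
  have "take j (path_word \<alpha>0 \<mu>) = fwd_letters \<beta>1 @ fwd_letters \<beta>2 @ fwd_letters \<mu> @ rev (bwd_letters \<beta>2)"
    unfolding tq X Y2[symmetric] by simp
  moreover have "drop j (path_word \<alpha>0 \<mu>) = rev (bwd_letters \<beta>1) @ [Lh]" unfolding dq Y1[symmetric] ..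
  ultimately have "path_word \<alpha> \<mu> = Lu # take j (path_word \<alpha>0 \<mu>) @ Lu # drop j (path_word \<alpha>0 \<mu>)"
    unfolding \<alpha>_def path_word_def core_word_def by simp
  moreover have "half_path (m+2) \<alpha> \<mu>"
    using half_path_TU_TD_insert[OF v[unfolded a0] nd1 b1] unfolding \<alpha>_def .
  ultimately show ?thesis by blast
qed

lemma u_pair_insert_half_path:
  assumes v: "half_path m \<alpha>0 \<mu>" and ins: "u_pair_insert (path_word \<alpha>0 \<mu>) q"
  shows "\<exists>\<alpha>. half_path (m+2) \<alpha> \<mu> \<and> path_word \<alpha> \<mu> = q"
proof -
  obtain A B where AB: "path_word \<alpha>0 \<mu> = A @ B" "q = Lu # A @ Lu # B" "Lu \<notin> set B" "2 \<le> length B"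
    using ins unfolding u_pair_insert_def by blast
  define j where "j = length A"
  have A: "A = take j (path_word \<alpha>0 \<mu>)" and B: "B = drop j (path_word \<alpha>0 \<mu>)"
    unfolding j_def AB(1) by simp_all
  have nu: "Lu \<notin> set (drop j (path_word \<alpha>0 \<mu>))" using AB(3) B by simp
  have jl: "j + 2 \<le> length (path_word \<alpha>0 \<mu>)" using AB(1,4) unfolding j_def by simp
  have mu: "middle \<mu>" using v unfolding half_path_def by simp
  show ?thesis
  proof (cases "j < length (fwd_letters \<alpha>0) \<or> (j = length (fwd_letters \<alpha>0) \<and> \<mu> \<noteq> [])")
    case True
    then show ?thesis using insert_pair_front[OF v nu] AB(2) A B by blast
  next
    case False
    then have "length (fwd_letters \<alpha>0) + length (fwd_letters \<mu>) \<le> j" using mu by auto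
    then show ?thesis using insert_pair_back[OF v nu _ jl] AB(2) A B by simp
  qed
qed

lemma class_rev_Nil: "class_rev [] = id"
  by (rule ext) (simp add: class_rev_outside)

lemma class_rev_Lh: "class_rev [Lh] = id"
proof
  fix i show "class_rev [Lh] i = id i"
    using class_rev_range[of 1 "[Lh]"] class_rev_outside[of i "[Lh]"] by (cases "i = 1") auto
qed

lemma half_path_0: "half_path 0 \<alpha> \<mu> \<Longrightarrow> \<alpha> = [] \<and> \<mu> = []"
  unfolding half_path_def using toks_width_eq_0 by auto

lemma Lu_notin_drop_if_larger_after_le_1:
  assumes q: "letters_by_count q" and lo: "1 \<le> lo"
    and le1: "\<And>p. lo \<le> p \<Longrightarrow> p \<le> length q \<Longrightarrow> larger_after (length q) (class_rev q) p \<le> 1"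
  shows "Lu \<notin> set (drop (lo - 1) q)"
proof
  assume "Lu \<in> set (drop (lo - 1) q)"
  then obtain t where t: "t < length q - (lo - 1)" "q ! (lo - 1 + t) = Lu"
    by (auto simp: in_set_conv_nth)
  have p: "lo \<le> lo + t" "lo + t \<le> length q" using t(1) lo by auto
  have "2 \<le> larger_after (length q) (class_rev q) (lo + t)"
    using letters_by_count_nth_eq_Lu_iff[OF q, of "lo + t"] p lo t(2) by (simp add: add.commute)
  then show False using le1[OF p] by simp
qed

lemma larger_after_add_fixed_le_1:
  assumes s: "\<sigma> permutes {1..N-1}" and n: "ascent_tops_bounded N (add_fixed N \<sigma>)"
    and p: "1 \<le> p" "p \<le> N - 1"
  shows "larger_after (N-1) \<sigma> p \<le> 1"
proof -
  have "add_fixed N \<sigma> 1 < add_fixed N \<sigma> (Suc p)"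
    using add_fixed_Suc[OF p] permutes_range[OF s p] by simp
  moreover have "1 \<le> (1::nat)" "1 < Suc p" "Suc p \<le> N" using p by auto
  ultimately have "larger_after N (add_fixed N \<sigma>) (Suc p) \<le> 1"
    using n unfolding ascent_tops_bounded_def by blast
  then show ?thesis using larger_after_add_fixed_Suc[OF p] by simp
qed

lemma larger_after_add_cycle_le_1:
  assumes s: "\<sigma> permutes {1..N-2}" and k: "2 \<le> k" "k \<le> N" and n: "ascent_tops_bounded N (add_cycle N k \<sigma>)"
    and p: "k - 1 \<le> p" "p \<le> N - 2"
  shows "larger_after (N-2) \<sigma> p \<le> 1"
proof -
  have p1: "1 \<le> p" using p k by simp
  have lp: "lift k p = p + 2" unfolding lift_def using p by simp
  have "add_cycle N k \<sigma> k < add_cycle N k \<sigma> (lift k p)"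
    using add_cycle_lift[OF k p1 p(2)] lift_ge2[of "\<sigma> p" k] permutes_range[OF s p1 p(2)] k by simp
  moreover have "1 \<le> k" "k < lift k p" "lift k p \<le> N" using k p lp by auto
  ultimately have "larger_after N (add_cycle N k \<sigma>) (lift k p) \<le> 1"
    using n unfolding ascent_tops_bounded_def by blast
  then show ?thesis using larger_after_add_cycle_lift[OF k p1 p(2)] by simp
qed

lemma half_path_add_fixed:
  assumes v: "half_path m \<alpha>0 \<mu>" and n: "ascent_tops_bounded (m+2) (add_fixed (m+2) (class_rev (path_word \<alpha>0 \<mu>)))"
  shows "\<exists>\<alpha> \<mu>'. half_path (m+1) \<alpha> \<mu>' \<and> class_rev (path_word \<alpha> \<mu>') = add_fixed (m+2) (class_rev (path_word \<alpha>0 \<mu>))"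
proof (cases "m = 0")
  case True
  then have "\<alpha>0 = [] \<and> \<mu> = []" using half_path_0 v by simp
  moreover have "half_path 1 [] [TR]" unfolding half_path_def by simp
  moreover have "class_rev (Lr # [Lh]) = add_fixed 2 (class_rev [Lh])"
    using class_rev_Cons_fresh[of Lr "[Lh]"] by (simp add: numeral_2_eq_2)
  ultimately have "half_path (m+1) [] [TR] \<and>
      class_rev (path_word [] [TR]) = add_fixed (m+2) (class_rev (path_word \<alpha>0 \<mu>))"
    using True by (simp add: path_word_def core_word_def numeral_2_eq_2)
  then show ?thesis by blast
next
  case False
  let ?q0 = "path_word \<alpha>0 \<mu>"
  have lq: "length ?q0 = m + 1" using path_word_length[OF v] .
  have s: "class_rev ?q0 permutes {1..m+2-1}" using class_rev_permutes[of ?q0] lq by simp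
  have adm: "letters_by_count ?q0" using half_path_admissible[OF v] unfolding admissible_def by simp
  have "Lu \<notin> set (drop (1 - 1) ?q0)"
    by (rule Lu_notin_drop_if_larger_after_le_1[OF adm]) (use larger_after_add_fixed_le_1[OF s n] lq in auto)
  then have uq: "Lu \<notin> set ?q0" by simp
  then have nd: "TU \<notin> set \<alpha>0" "TD \<notin> set \<alpha>0"
    using Lu_notin_fwd_letters_iff Lu_notin_bwd_letters_iff unfolding path_word_def core_word_def by auto
  have "half_path (m+1) (TU # \<alpha>0) \<mu>"
  proof -
    have "\<mu> = [] \<longrightarrow> \<alpha>0 \<noteq> []" using v False unfolding half_path_def by auto
    then have "\<mu> = [] \<longrightarrow> last (TU # \<alpha>0) \<noteq> TU" using nd(1) last_in_set by fastforce
    then show ?thesis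
      using v no_ud_if_TD_notin[of "TU # \<alpha>0"] stays_above_if_TD_notin[OF nd(2), of 1] nd(2) unfolding half_path_def by auto
  qed
  moreover have "class_rev (path_word (TU # \<alpha>0) \<mu>) = add_fixed (m+2) (class_rev ?q0)"
    using class_rev_Cons_fresh[OF uq] lq unfolding path_word_TU by simp
  ultimately show ?thesis by blast
qed

lemma half_path_add_cycle:
  assumes v: "half_path m \<alpha>0 \<mu>" and k: "2 \<le> k" "k \<le> m + 3"
    and n: "ascent_tops_bounded (m+3) (add_cycle (m+3) k (class_rev (path_word \<alpha>0 \<mu>)))"
  shows "\<exists>\<alpha>. half_path (m+2) \<alpha> \<mu> \<and> class_rev (path_word \<alpha> \<mu>) = add_cycle (m+3) k (class_rev (path_word \<alpha>0 \<mu>))"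
proof -
  let ?q0 = "path_word \<alpha>0 \<mu>"
  have lq: "length ?q0 = m + 1" using path_word_length[OF v] .
  have pair: "class_rev (x # A @ x # B) = add_cycle (m+3) k (class_rev ?q0)"
    if "A @ B = ?q0" "length A + 2 = k" "x \<notin> set B" for x A B
  proof -
    have N: "length A + length B + 2 = m + 3" using arg_cong[OF that(1), of length] lq by simp
    show ?thesis using class_rev_pair_word[OF that(3), of A] by (simp only: that(1,2) N)
  qed
  consider "k = m + 3" | "k = m + 2" | "k \<le> m + 1" using k by linarith
  then show ?thesis
  proof cases
    case 1
    have "half_path (m+2) (TH # \<alpha>0) \<mu>" using v unfolding half_path_def by (auto simp: no_ud_Cons)
    moreover have "class_rev (path_word (TH # \<alpha>0) \<mu>) = add_cycle (m+3) k (class_rev ?q0)"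
      unfolding path_word_TH using pair[of "?q0" "[]"] lq 1 by simp
    ultimately show ?thesis by blast
  next
    case 2
    have "half_path (m+2) (TR # \<alpha>0) \<mu>" using v unfolding half_path_def by (auto simp: no_ud_Cons)
    moreover have "class_rev (path_word (TR # \<alpha>0) \<mu>) = add_cycle (m+3) k (class_rev ?q0)"
      unfolding path_word_TR using pair[of "core_word \<alpha>0 \<mu>" "[Lh]"] lq 2 by (simp add: path_word_def)
    ultimately show ?thesis by blast
  next
    case 3
    define j where "j = k - 2"
    have s: "class_rev ?q0 permutes {1..m+3-2}" using class_rev_permutes[of ?q0] lq by simp
    have adm: "letters_by_count ?q0" using half_path_admissible[OF v] unfolding admissible_def by simp
    have "Lu \<notin> set (drop (k - 1 - 1) ?q0)"
      by (rule Lu_notin_drop_if_larger_after_le_1[OF adm]) (use larger_after_add_cycle_le_1[OF s k n] lq k in auto)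
    then have nu: "Lu \<notin> set (drop j ?q0)" unfolding j_def by (simp add: numeral_2_eq_2)
    moreover have "2 \<le> length (drop j ?q0)" using 3 lq k unfolding j_def by simp
    ultimately have "u_pair_insert ?q0 (Lu # take j ?q0 @ Lu # drop j ?q0)"
      by (rule u_pair_insert_take_drop)
    then obtain \<alpha> where \<alpha>: "half_path (m+2) \<alpha> \<mu>" "path_word \<alpha> \<mu> = Lu # take j ?q0 @ Lu # drop j ?q0"
      using u_pair_insert_half_path[OF v] by blast
    moreover have "length (take j ?q0) + 2 = k" using 3 lq k unfolding j_def by simp
    then have "class_rev (path_word \<alpha> \<mu>) = add_cycle (m+3) k (class_rev ?q0)"
      unfolding \<alpha>(2) using pair[of "take j ?q0" "drop j ?q0" Lu] nu by simp
    ultimately show ?thesis by blast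
  qed
qed

lemma involution_fixed_decomp:
  assumes p: "\<pi> permutes {1..N}" and inv: "\<And>i. \<pi> (\<pi> i) = i" and k: "\<pi> 1 = 1"
    and n: "ascent_tops_bounded N \<pi>"
  obtains \<sigma> where "\<sigma> permutes {1..N-1}" "\<forall>i. \<sigma> (\<sigma> i) = i" "ascent_tops_bounded (N-1) \<sigma>"
    "\<pi> = add_fixed N \<sigma>"
proof
  show "del_fixed N \<pi> permutes {1..N-1}" "\<forall>i. del_fixed N \<pi> (del_fixed N \<pi> i) = i"
    using del_fixed_permutes[OF p inv k] del_fixed_involution[OF p inv k] by auto
  show "\<pi> = add_fixed N (del_fixed N \<pi>)" using add_fixed_del_fixed[OF p inv k] by simp
  then show "ascent_tops_bounded (N-1) (del_fixed N \<pi>)"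
    using ascent_tops_bounded_add_fixedD n by simp
qed

lemma involution_cycle_decomp:
  assumes p: "\<pi> permutes {1..N}" and inv: "\<And>i. \<pi> (\<pi> i) = i" and k: "2 \<le> \<pi> 1"
    and n: "ascent_tops_bounded N \<pi>"
  obtains \<sigma> where "\<sigma> permutes {1..N-2}" "\<forall>i. \<sigma> (\<sigma> i) = i" "ascent_tops_bounded (N-2) \<sigma>"
    "\<pi> = add_cycle N (\<pi> 1) \<sigma>"
proof
  let ?\<sigma> = "del_cycle N (\<pi> 1) \<pi>"
  show s: "?\<sigma> permutes {1..N-2}" "\<forall>i. ?\<sigma> (?\<sigma> i) = i"
    using del_cycle_permutes[OF p inv refl k] del_cycle_involution[OF p inv refl k] by auto
  show "\<pi> = add_cycle N (\<pi> 1) ?\<sigma>" using add_cycle_del_cycle[OF p inv refl k] by simp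
  then show "ascent_tops_bounded (N-2) ?\<sigma>"
    using ascent_tops_bounded_add_cycleD[OF k permutes_image_1_le[OF p k]] n by simp
qed

lemma half_path_exists:
  assumes "1 \<le> N" "\<pi> permutes {1..N}" "\<forall>i. \<pi> (\<pi> i) = i" "ascent_tops_bounded N \<pi>"
  shows "\<exists>\<alpha> \<mu>. half_path (N-1) \<alpha> \<mu> \<and> class_rev (path_word \<alpha> \<mu>) = \<pi>"
  using assms
proof (induction N arbitrary: \<pi> rule: less_induct)
  case (less N)
  have N1: "1 \<le> N" and p: "\<pi> permutes {1..N}" and inv: "\<And>i. \<pi> (\<pi> i) = i" and n: "ascent_tops_bounded N \<pi>"
    using less.prems by auto
  have k: "1 \<le> \<pi> 1" "\<pi> 1 \<le> N" using permutes_range[OF p, of 1] N1 by auto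
  consider "N = 1" | "2 \<le> N" "\<pi> 1 = 1" | "N = 2" "\<pi> 1 = 2" | "3 \<le> N" "2 \<le> \<pi> 1" using k N1 by linarith
  then show ?case
  proof cases
    case 1
    then have "half_path (N-1) [] [] \<and> class_rev (path_word [] []) = \<pi>"
      using p class_rev_Lh by (simp add: half_path_def path_word_def core_word_def)
    then show ?thesis by blast
  next
    case 2
    obtain \<sigma> where \<sigma>: "\<sigma> permutes {1..N-1}" "\<forall>i. \<sigma> (\<sigma> i) = i" "ascent_tops_bounded (N-1) \<sigma>"
      "\<pi> = add_fixed N \<sigma>" using involution_fixed_decomp[OF p inv 2(2) n] .
    have "N - 1 < N" "1 \<le> N - 1" "N - 1 - 1 = N - 2" using 2 by auto
    then have "\<exists>\<alpha> \<mu>. half_path (N-2) \<alpha> \<mu> \<and> class_rev (path_word \<alpha> \<mu>) = \<sigma>"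
      using less.IH[of "N-1" \<sigma>] \<sigma>(1-3) by simp
    then obtain \<alpha>0 \<mu>0 where v0: "half_path (N-2) \<alpha>0 \<mu>0" and r0: "class_rev (path_word \<alpha>0 \<mu>0) = \<sigma>"
      by blast
    have "N - 2 + 2 = N" "N - 2 + 1 = N - 1" using 2 by auto
    then show ?thesis using half_path_add_fixed[OF v0] n r0 \<sigma>(4) by metis
  next
    case 3
    obtain \<sigma> where "\<sigma> permutes {1..N-2}" "\<pi> = add_cycle N (\<pi> 1) \<sigma>"
      using involution_cycle_decomp[OF p inv _ n] 3 by auto
    then have "\<pi> = add_cycle 2 2 (class_rev [])" using 3 class_rev_Nil by simp
    moreover have "class_rev (Lh # [] @ Lh # []) = add_cycle 2 2 (class_rev [])"
      using class_rev_pair_word[of Lh "[]" "[]"] by (simp add: numeral_2_eq_2)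
    ultimately have "half_path (N-1) [] [TH] \<and> class_rev (path_word [] [TH]) = \<pi>"
      using 3 by (simp add: half_path_def path_word_def core_word_def)
    then show ?thesis by blast
  next
    case 4
    obtain \<sigma> where \<sigma>: "\<sigma> permutes {1..N-2}" "\<forall>i. \<sigma> (\<sigma> i) = i" "ascent_tops_bounded (N-2) \<sigma>"
      "\<pi> = add_cycle N (\<pi> 1) \<sigma>" using involution_cycle_decomp[OF p inv 4(2) n] .
    have "N - 2 < N" "1 \<le> N - 2" "N - 2 - 1 = N - 3" using 4 by auto
    then have "\<exists>\<alpha> \<mu>. half_path (N-3) \<alpha> \<mu> \<and> class_rev (path_word \<alpha> \<mu>) = \<sigma>"
      using less.IH[of "N-2" \<sigma>] \<sigma>(1-3) by simp
    then obtain \<alpha>0 \<mu>0 where v0: "half_path (N-3) \<alpha>0 \<mu>0" and r0: "class_rev (path_word \<alpha>0 \<mu>0) = \<sigma>"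
      by blast
    have "N - 3 + 3 = N" "N - 3 + 2 = N - 1" using 4 by auto
    then show ?thesis using half_path_add_cycle[OF v0, of "\<pi> 1"] 4 k n r0 \<sigma>(4) by metis
  qed
qed

fun tok_steps :: "tok \<Rightarrow> step list" where
  "tok_steps TH = [H]" | "tok_steps TR = [U, D]" | "tok_steps TU = [U]" | "tok_steps TD = [D]"

definition steps_of :: "tok list \<Rightarrow> step list" where "steps_of xs = concat (map tok_steps xs)"

lemma steps_of_simps[simp]:
  "steps_of [] = []" "steps_of (t # xs) = tok_steps t @ steps_of xs" "steps_of (xs @ ys) = steps_of xs @ steps_of ys"
  unfolding steps_of_def by auto

fun tok_flip :: "tok \<Rightarrow> tok" where
  "tok_flip TU = TD" | "tok_flip TD = TU" | "tok_flip TH = TH" | "tok_flip TR = TR"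

lemma tok_flip_tok_flip[simp]: "tok_flip (tok_flip t) = t" by (cases t) auto

lemma tok_flip_comp[simp]: "tok_flip \<circ> tok_flip = id" by (rule ext) simp

definition sym_path :: "tok list \<Rightarrow> tok list \<Rightarrow> step list" where
  "sym_path \<alpha> \<mu> = steps_of (\<alpha> @ \<mu> @ rev (map tok_flip \<alpha>))"

lemma compress_U_not_D:
  assumes "ys = [] \<or> hd ys \<noteq> D"
  shows "compress (U # ys) = Lu # compress ys"
proof (cases ys)
  case (Cons a ys') then show ?thesis using assms by (cases a) auto
qed simp

lemma tok_steps_ne[simp]: "tok_steps t \<noteq> []" by (cases t) auto

lemma hd_steps_of:
  "\<tau> \<noteq> [] \<Longrightarrow> hd (steps_of \<tau>) = hd (tok_steps (hd \<tau>))"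
  by (cases \<tau>) auto

lemma hd_tok_steps_D: "hd (tok_steps t) = D \<longleftrightarrow> t = TD" by (cases t) auto

lemma compress_steps_of:
  "no_ud \<tau> \<Longrightarrow> compress (steps_of \<tau>) = fwd_letters \<tau>"
proof (induction \<tau>)
  case Nil then show ?case by simp
next
  case (Cons t \<tau>)
  have g: "no_ud \<tau>" using Cons.prems by (simp add: no_ud_Cons)
  show ?case
  proof (cases t)
    case TU
    have "steps_of \<tau> = [] \<or> hd (steps_of \<tau>) \<noteq> D"
    proof (cases "\<tau> = []")
      case False
      then have "hd \<tau> \<noteq> TD" using Cons.prems TU by (simp add: no_ud_Cons)
      then show ?thesis using False hd_steps_of hd_tok_steps_D by simp
    qed simp
    then show ?thesis using TU Cons.IH[OF g] compress_U_not_D by simp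
  qed (use Cons.IH[OF g] in auto)
qed

lemma fwd_letters_rev: "fwd_letters (rev xs) = rev (fwd_letters xs)"
proof (induction xs)
  case (Cons x xs)
  have "fwd_letters (x # xs) = fwd_letters [x] @ fwd_letters xs" using fwd_letters_append[of "[x]" xs] by simp
  moreover have "rev (fwd_letters [x]) = fwd_letters [x]" by (cases x) auto
  ultimately show ?case using Cons by simp
qed simp

lemma fwd_letters_map_tok_flip: "fwd_letters (map tok_flip xs) = bwd_letters xs"
proof (induction xs)
  case (Cons x xs) then show ?case by (cases x) auto
qed simp

lemma no_ud_rev_tok_flip: "no_ud (rev (map tok_flip xs)) = no_ud xs"
proof (induction xs)
  case Nil then show ?case by simp
next
  case (Cons x xs)
  show ?case
  proof (cases xs)
    case Nil then show ?thesis by simp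
  next
    case (Cons y ys)
    have "last (rev (map tok_flip xs)) = tok_flip (hd xs)" using Cons by (simp add: last_rev)
    then show ?thesis using Cons.IH Cons by (auto simp: no_ud_append no_ud_Cons) (cases x; cases y; simp)+
  qed
qed

lemma no_ud_sym_path:
  assumes v: "half_path n \<alpha> \<mu>"
  shows "no_ud (\<alpha> @ \<mu> @ rev (map tok_flip \<alpha>))"
proof -
  have gd: "no_ud \<alpha>" and mu: "middle \<mu>" and lst: "\<mu> = [] \<longrightarrow> \<alpha> \<noteq> [] \<longrightarrow> last \<alpha> \<noteq> TU"
    using v unfolding half_path_def by auto
  have gr: "no_ud (rev (map tok_flip \<alpha>))" using gd no_ud_rev_tok_flip by simp
  have hr: "\<alpha> \<noteq> [] \<Longrightarrow> hd (rev (map tok_flip \<alpha>)) = tok_flip (last \<alpha>)" by (simp add: hd_rev last_map)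
  have g2: "no_ud (\<mu> @ rev (map tok_flip \<alpha>))" using mu gr by (auto simp: no_ud_append no_ud_Cons)
  show ?thesis unfolding no_ud_append[of \<alpha>] using gd g2
  proof (intro conjI; (simp; fail)?)
    show "\<alpha> \<noteq> [] \<longrightarrow> \<mu> @ rev (map tok_flip \<alpha>) \<noteq> [] \<longrightarrow> \<not> (last \<alpha> = TU \<and> hd (\<mu> @ rev (map tok_flip \<alpha>)) = TD)"
    proof (intro impI)
      assume a: "\<alpha> \<noteq> []"
      show "\<not> (last \<alpha> = TU \<and> hd (\<mu> @ rev (map tok_flip \<alpha>)) = TD)"
      proof (cases "\<mu> = []")
        case True then show ?thesis using lst a hr by (cases "last \<alpha>") auto
      next
        case False then show ?thesis using mu by auto
      qed
    qed
  qed
qed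

lemma word'_sym_path:
  assumes v: "half_path n \<alpha> \<mu>"
  shows "word' (sym_path \<alpha> \<mu>) = path_word \<alpha> \<mu>"
proof -
  let ?\<tau> = "\<alpha> @ \<mu> @ rev (map tok_flip \<alpha>)"
  have g: "no_ud (?\<tau> @ [TH])" unfolding no_ud_append[of ?\<tau> "[TH]"] using no_ud_sym_path[OF v] by simp
  have "word' (sym_path \<alpha> \<mu>) = compress (steps_of (?\<tau> @ [TH]))" unfolding word'_def sym_path_def by simp
  also have "\<dots> = fwd_letters (?\<tau> @ [TH])" using compress_steps_of[OF g] .
  also have "\<dots> = path_word \<alpha> \<mu>" unfolding path_word_def core_word_def by (simp add: fwd_letters_rev fwd_letters_map_tok_flip)
  finally show ?thesis .
qed

lemma height_append[simp]: "height (xs @ ys) = height xs + height ys"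
  unfolding height_def by simp

lemma height_nil[simp]: "height [] = 0" unfolding height_def by simp

lemma height_tok_steps[simp]:
  "height (tok_steps t) = tok_rise t" unfolding height_def by (cases t) auto

lemma height_steps_of: "height (steps_of \<tau>) = tok_height \<tau>" by (induction \<tau>) auto

lemma width_steps_of: "sum_list (map step_width (steps_of \<tau>)) = toks_width \<tau>"
proof (induction \<tau>)
  case (Cons t \<tau>) then show ?case by (cases t) auto
qed simp

lemma height_take_tok_steps:
  "k < length (tok_steps t) \<Longrightarrow> 0 \<le> height (take k (tok_steps t))"
  by (cases t; cases k) (auto simp: height_def)

lemma stays_above_iff_prefix_heights:
  "0 \<le> h \<Longrightarrow> stays_above h \<tau> \<longleftrightarrow> (\<forall>k. 0 \<le> h + height (take k (steps_of \<tau>)))"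
proof (induction \<tau> arbitrary: h)
  case Nil then show ?case by simp
next
  case (Cons t \<tau>)
  have split: "height (take k (steps_of (t # \<tau>))) = height (take k (tok_steps t)) + height (take (k - length (tok_steps t)) (steps_of \<tau>))" for k
    by (simp add: take_append)
  show ?case
  proof
    assume b: "stays_above h (t # \<tau>)"
    then have h1: "0 \<le> h + tok_rise t" and b2: "stays_above (h + tok_rise t) \<tau>" by auto
    have IH: "\<forall>k. 0 \<le> h + tok_rise t + height (take k (steps_of \<tau>))" using Cons.IH[OF h1] b2 by simp
    show "\<forall>k. 0 \<le> h + height (take k (steps_of (t # \<tau>)))"
    proof
      fix k
      show "0 \<le> h + height (take k (steps_of (t # \<tau>)))"
      proof (cases "k < length (tok_steps t)")
        case True
        then have "k - length (tok_steps t) = 0" by simp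
        then show ?thesis using split[of k] height_take_tok_steps[OF True] Cons.prems by simp
      next
        case False
        then have "take k (tok_steps t) = tok_steps t" by simp
        then show ?thesis using split[of k] IH by (simp add: add.assoc)
      qed
    qed
  next
    assume a: "\<forall>k. 0 \<le> h + height (take k (steps_of (t # \<tau>)))"
    have "0 \<le> h + height (take (length (tok_steps t)) (steps_of (t # \<tau>)))" using a by blast
    then have h1: "0 \<le> h + tok_rise t" by simp
    have "\<forall>k. 0 \<le> h + tok_rise t + height (take k (steps_of \<tau>))"
    proof
      fix k
      have "0 \<le> h + height (take (length (tok_steps t) + k) (steps_of (t # \<tau>)))" using a by blast
      then show "0 \<le> h + tok_rise t + height (take k (steps_of \<tau>))" by (simp add: add.assoc)
    qed
    then have "stays_above (h + tok_rise t) \<tau>" using Cons.IH[OF h1] by simp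
    then show "stays_above h (t # \<tau>)" using h1 by simp
  qed
qed

lemma stays_above_nonneg:
  "stays_above h xs \<Longrightarrow> 0 \<le> h \<Longrightarrow> 0 \<le> h + tok_height xs"
proof (induction xs arbitrary: h)
  case (Cons t xs)
  have "0 \<le> h + tok_rise t + tok_height xs" using Cons.IH[of "h + tok_rise t"] Cons.prems by simp
  then show ?case by simp
qed simp

lemma tok_rise_tok_flip[simp]: "tok_rise (tok_flip t) = - tok_rise t" by (cases t) auto

lemma stays_above_rev_tok_flip:
  "stays_above 0 xs \<Longrightarrow> stays_above (tok_height xs) (rev (map tok_flip xs))"
proof (induction xs rule: rev_induct)
  case Nil then show ?case by simp
next
  case (snoc t ys)
  have b: "stays_above 0 ys" "0 \<le> tok_height ys + tok_rise t" using snoc.prems by (auto simp: stays_above_append)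
  have "0 \<le> tok_height ys" using stays_above_nonneg[OF b(1)] by simp
  then show ?case using snoc.IH[OF b(1)] b(2) by simp
qed

lemma mirror_steps_of: "mirror (steps_of \<tau>) = steps_of (rev (map tok_flip \<tau>))"
proof (induction \<tau>)
  case (Cons t \<tau>)
  have "rev (map flip_step (tok_steps t)) = tok_steps (tok_flip t)" by (cases t) auto
  then show ?case using Cons unfolding mirror_def by simp
qed (simp add: mirror_def)

lemma tok_height_rev_tok_flip: "tok_height (rev (map tok_flip xs)) = - tok_height xs"
  unfolding tok_height_def by (induction xs) auto

lemma toks_width_rev_tok_flip: "toks_width (rev (map tok_flip xs)) = toks_width xs"
proof -
  have "tok_width (tok_flip t) = tok_width t" for t by (cases t) auto
  then show ?thesis unfolding toks_width_def by (simp add: rev_map[symmetric] sum_list_rev comp_def)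
qed

lemma sym_path_in_Sh:
  assumes v: "half_path n \<alpha> \<mu>"
  shows "sym_path \<alpha> \<mu> \<in> Sh n"
proof -
  let ?\<tau> = "\<alpha> @ \<mu> @ rev (map tok_flip \<alpha>)"
  have mu: "middle \<mu>" and bal: "stays_above 0 \<alpha>" and width: "2 * toks_width \<alpha> + toks_width \<mu> = 2 * n"
    using v unfolding half_path_def by auto
  have hm: "tok_height \<mu> = 0" using mu by auto
  have b: "stays_above 0 ?\<tau>"
  proof -
    have "0 \<le> tok_height \<alpha>" using stays_above_nonneg[OF bal] by simp
    then have "stays_above (tok_height \<alpha>) \<mu>" using mu by auto
    moreover have "stays_above (tok_height \<alpha> + tok_height \<mu>) (rev (map tok_flip \<alpha>))" using stays_above_rev_tok_flip[OF bal] hm by simp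
    ultimately show ?thesis using bal by (simp add: stays_above_append)
  qed
  have "schroeder n (sym_path \<alpha> \<mu>)"
    unfolding schroeder_def sym_path_def
  proof (intro conjI)
    show "sum_list (map step_width (steps_of ?\<tau>)) = 2 * n" unfolding width_steps_of using width toks_width_rev_tok_flip by simp
    show "height (steps_of ?\<tau>) = 0" unfolding height_steps_of using hm tok_height_rev_tok_flip by simp
    show "\<forall>k\<le>length (steps_of ?\<tau>). 0 \<le> height (take k (steps_of ?\<tau>))" using stays_above_iff_prefix_heights[of 0 ?\<tau>] b by simp
  qed
  moreover have "symmetric_path (sym_path \<alpha> \<mu>)"
  proof -
    have "rev (map tok_flip \<mu>) = \<mu>" using mu by auto
    then have "rev (map tok_flip ?\<tau>) = ?\<tau>" by (simp add: rev_map)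
    then show ?thesis unfolding symmetric_path_def sym_path_def mirror_steps_of by simp
  qed
  ultimately show ?thesis unfolding Sh_def by simp
qed

fun tokenize :: "step list \<Rightarrow> tok list" where
  "tokenize [] = []"
| "tokenize (U # D # xs) = TR # tokenize xs"
| "tokenize (U # xs) = TU # tokenize xs"
| "tokenize (D # xs) = TD # tokenize xs"
| "tokenize (H # xs) = TH # tokenize xs"

lemma steps_of_tokenize: "steps_of (tokenize p) = p"
  by (induction p rule: tokenize.induct) auto

lemma hd_tokenize_TD:
  "tokenize p \<noteq> [] \<Longrightarrow> hd (tokenize p) = TD \<Longrightarrow> p \<noteq> [] \<and> hd p = D"
  by (induction p rule: tokenize.induct) auto

lemma no_ud_tokenize: "no_ud (tokenize p)"
  by (induction p rule: tokenize.induct) (auto simp: no_ud_Cons dest!: hd_tokenize_TD)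

lemma tokenize_U_not_D:
  assumes "ys = [] \<or> hd ys \<noteq> D"
  shows "tokenize (U # ys) = TU # tokenize ys"
proof (cases ys)
  case (Cons a ys') then show ?thesis using assms by (cases a) auto
qed simp

lemma tokenize_steps_of: "no_ud \<tau> \<Longrightarrow> tokenize (steps_of \<tau>) = \<tau>"
proof (induction \<tau>)
  case Nil then show ?case by simp
next
  case (Cons t \<tau>)
  have g: "no_ud \<tau>" using Cons.prems by (simp add: no_ud_Cons)
  show ?case
  proof (cases t)
    case TU
    have "steps_of \<tau> = [] \<or> hd (steps_of \<tau>) \<noteq> D"
    proof (cases "\<tau> = []")
      case False
      then have "hd \<tau> \<noteq> TD" using Cons.prems TU by (simp add: no_ud_Cons)
      then show ?thesis using False hd_steps_of hd_tok_steps_D by simp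
    qed simp
    then show ?thesis using TU Cons.IH[OF g] tokenize_U_not_D by simp
  qed (use Cons.IH[OF g] in auto)
qed

lemma mirror_symmetric_toks_split: assumes eq: "\<tau> = rev (map tok_flip \<tau>)"
  shows "\<exists>\<alpha> \<mu>. \<tau> = \<alpha> @ \<mu> @ rev (map tok_flip \<alpha>) \<and> (middle \<mu>)"
proof -
  define L where "L = length \<tau>"
  define h where "h = L div 2"
  define \<alpha> where "\<alpha> = take h \<tau>"
  have d: "drop (L - h) \<tau> = rev (map tok_flip \<alpha>)"
  proof -
    have "drop (L - h) \<tau> = drop (L - h) (rev (map tok_flip \<tau>))" using arg_cong[OF eq, of "drop (L - h)"] .
    also have "\<dots> = rev (take h (map tok_flip \<tau>))" unfolding L_def by (simp add: drop_rev h_def L_def)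
    finally show ?thesis unfolding \<alpha>_def by (simp add: take_map)
  qed
  show ?thesis
  proof (cases "even L")
    case True
    then have "L - h = h" unfolding h_def by auto
    then have "\<tau> = \<alpha> @ [] @ rev (map tok_flip \<alpha>)" using d unfolding \<alpha>_def by (metis append_Nil append_take_drop_id)
    then show ?thesis by blast
  next
    case False
    then have Lh: "L - h = Suc h" "h < L" unfolding h_def by presburger+
    define m where "m = \<tau> ! h"
    have "\<tau> = take h \<tau> @ \<tau> ! h # drop (Suc h) \<tau>" using Lh(2) unfolding L_def by (simp add: id_take_nth_drop)
    then have t: "\<tau> = \<alpha> @ [m] @ rev (map tok_flip \<alpha>)" using d Lh unfolding \<alpha>_def m_def by simp
    have "m = rev (map tok_flip \<tau>) ! h" using arg_cong[OF eq, of "\<lambda>x. x ! h"] unfolding m_def .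
    also have "\<dots> = tok_flip (\<tau> ! (L - 1 - h))" using Lh unfolding L_def by (simp add: rev_nth)
    also have "L - 1 - h = h" using Lh by simp
    finally have "m = tok_flip m" unfolding m_def by simp
    then have "m = TH \<or> m = TR" by (cases m) auto
    then show ?thesis using t by blast
  qed
qed

lemma Sh_imp_sym_path:
  assumes p: "p \<in> Sh n"
  shows "\<exists>\<alpha> \<mu>. half_path n \<alpha> \<mu> \<and> p = sym_path \<alpha> \<mu>"
proof -
  define \<tau> where "\<tau> = tokenize p"
  have pc: "p = steps_of \<tau>" unfolding \<tau>_def by (simp add: steps_of_tokenize)
  have g: "no_ud \<tau>" unfolding \<tau>_def by (rule no_ud_tokenize)
  have sch: "schroeder n p" and sym: "mirror p = p" using p unfolding Sh_def symmetric_path_def by auto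
  have "tokenize (mirror p) = rev (map tok_flip \<tau>)"
    unfolding pc mirror_steps_of by (rule tokenize_steps_of) (simp add: no_ud_rev_tok_flip g)
  then have eq: "\<tau> = rev (map tok_flip \<tau>)" using sym unfolding \<tau>_def by simp
  obtain \<alpha> \<mu> where t: "\<tau> = \<alpha> @ \<mu> @ rev (map tok_flip \<alpha>)" and mu: "middle \<mu>"
    using mirror_symmetric_toks_split[OF eq] by blast
  have "half_path n \<alpha> \<mu>"
    unfolding half_path_def
  proof (intro conjI)
    show "no_ud \<alpha>" using g t by (simp add: no_ud_append)
    show "middle \<mu>" using mu .
    show "\<mu> = [] \<longrightarrow> \<alpha> \<noteq> [] \<longrightarrow> last \<alpha> \<noteq> TU"
    proof (intro impI)
      assume "\<mu> = []" "\<alpha> \<noteq> []"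
      then have "no_ud (\<alpha> @ rev (map tok_flip \<alpha>))" "hd (rev (map tok_flip \<alpha>)) = tok_flip (last \<alpha>)" "rev (map tok_flip \<alpha>) \<noteq> []"
        using g t by (simp_all add: hd_rev last_map)
      then show "last \<alpha> \<noteq> TU" using \<open>\<alpha> \<noteq> []\<close> by (auto simp: no_ud_append)
    qed
    have "\<forall>k. 0 \<le> 0 + height (take k (steps_of \<tau>))"
    proof
      fix k
      show "0 \<le> 0 + height (take k (steps_of \<tau>))"
      proof (cases "k \<le> length p")
        case True then show ?thesis using sch pc unfolding schroeder_def by simp
      next
        case False
        then have "take k (steps_of \<tau>) = take (length p) (steps_of \<tau>)" using pc by simp
        then show ?thesis using sch pc unfolding schroeder_def by simp
      qed
    qed
    then have "stays_above 0 \<tau>" using stays_above_iff_prefix_heights[of 0 \<tau>] by simp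
    then show "stays_above 0 \<alpha>" using t by (simp add: stays_above_append)
    have "sum_list (map step_width p) = 2 * n" using sch unfolding schroeder_def by simp
    then show "2 * toks_width \<alpha> + toks_width \<mu> = 2 * n" using t pc width_steps_of toks_width_rev_tok_flip by simp
  qed
  moreover have "p = sym_path \<alpha> \<mu>" unfolding sym_path_def using pc t by simp
  ultimately show ?thesis by blast
qed

lemma letters_by_count_eqI:
  assumes "letters_by_count q1" "letters_by_count q2" "length q1 = length q2" "class_rev q1 = class_rev q2"
  shows "q1 = q2"
proof (rule nth_equalityI)
  show "length q1 = length q2" by fact
  fix i assume "i < length q1"
  then have "1 \<le> Suc i" "Suc i \<le> length q1" "Suc i \<le> length q2" using assms(3) by auto
  then show "q1 ! i = q2 ! i" using assms unfolding letters_by_count_def by (metis diff_Suc_1)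
qed

lemma Inv_avoid_iff:
  "\<pi> \<in> Inv_avoid (n + 1) {[1,2,3,4], [1,2,4,3]} \<longleftrightarrow>
     \<pi> permutes {1..n+1} \<and> (\<forall>i. \<pi> (\<pi> i) = i) \<and> ascent_tops_bounded (n+1) \<pi>"
  unfolding Inv_avoid_def using avoids_1234_1243_iff by auto

lemma phi_sym_path:
  "half_path n \<alpha> \<mu> \<Longrightarrow> phi (sym_path \<alpha> \<mu>) = class_rev (path_word \<alpha> \<mu>)"
  using phi_eq_class_rev word'_sym_path by simp

lemma class_rev_path_word_Inv_avoid:
  assumes "half_path n \<alpha> \<mu>"
  shows "class_rev (path_word \<alpha> \<mu>) \<in> Inv_avoid (n + 1) {[1,2,3,4], [1,2,4,3]}"
proof -
  have l: "length (path_word \<alpha> \<mu>) = n + 1" using path_word_length[OF assms] .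
  have "ascent_tops_bounded (n+1) (class_rev (path_word \<alpha> \<mu>))"
    using half_path_admissible[OF assms] l unfolding admissible_def by simp
  then show ?thesis
    unfolding Inv_avoid_iff using class_rev_permutes[of "path_word \<alpha> \<mu>"] class_rev_class_rev l by simp
qed

lemma phi_Sh_subset: "phi ` Sh n \<subseteq> Inv_avoid (n + 1) {[1,2,3,4], [1,2,4,3]}"
  using Sh_imp_sym_path class_rev_path_word_Inv_avoid phi_sym_path by fastforce

lemma inj_on_phi_Sh: "inj_on phi (Sh n)"
proof
  fix p1 p2 assume p: "p1 \<in> Sh n" "p2 \<in> Sh n" "phi p1 = phi p2"
  obtain \<alpha>1 \<mu>1 where v1: "half_path n \<alpha>1 \<mu>1" "p1 = sym_path \<alpha>1 \<mu>1" using Sh_imp_sym_path[OF p(1)] by blast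
  obtain \<alpha>2 \<mu>2 where v2: "half_path n \<alpha>2 \<mu>2" "p2 = sym_path \<alpha>2 \<mu>2" using Sh_imp_sym_path[OF p(2)] by blast
  have "path_word \<alpha>1 \<mu>1 = path_word \<alpha>2 \<mu>2"
  proof (rule letters_by_count_eqI)
    show "letters_by_count (path_word \<alpha>1 \<mu>1)" "letters_by_count (path_word \<alpha>2 \<mu>2)"
      using half_path_admissible[OF v1(1)] half_path_admissible[OF v2(1)] unfolding admissible_def by auto
    show "length (path_word \<alpha>1 \<mu>1) = length (path_word \<alpha>2 \<mu>2)"
      using path_word_length[OF v1(1)] path_word_length[OF v2(1)] by simp
    show "class_rev (path_word \<alpha>1 \<mu>1) = class_rev (path_word \<alpha>2 \<mu>2)"
      using p(3) phi_sym_path[OF v1(1)] phi_sym_path[OF v2(1)] v1(2) v2(2) by simp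
  qed
  then show "p1 = p2" using path_word_inj[OF v1(1) v2(1)] v1(2) v2(2) by simp
qed

lemma Inv_avoid_subset_phi_Sh: "Inv_avoid (n + 1) {[1,2,3,4], [1,2,4,3]} \<subseteq> phi ` Sh n"
proof
  fix \<pi> assume "\<pi> \<in> Inv_avoid (n + 1) {[1,2,3,4], [1,2,4,3]}"
  then obtain \<alpha> \<mu> where v: "half_path n \<alpha> \<mu>" "class_rev (path_word \<alpha> \<mu>) = \<pi>"
    using half_path_exists[of "n+1" \<pi>] unfolding Inv_avoid_iff by auto
  then show "\<pi> \<in> phi ` Sh n" using sym_path_in_Sh[OF v(1)] phi_sym_path[OF v(1)] by force
qed

theorem theorem2p1:
  fixes n :: nat
  shows "phi ` Sh n \<subseteq> Inv_avoid (n + 1) {[1,2,3,4], [1,2,4,3]} \<and>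
         bij_betw phi (Sh n) (Inv_avoid (n + 1) {[1,2,3,4], [1,2,4,3]})"
  using phi_Sh_subset inj_on_phi_Sh Inv_avoid_subset_phi_Sh unfolding bij_betw_def by blast

end
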